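(* Let $n\ge1$, $\ell\ge0$, $k\ge0$ be integers. Let $A(n,\ell,k)$ be the number of rooted trees $T$ on $[n]$ such that the root of $T$ has exactly $\ell$ children smaller than the root and $\mathrm{MD}(T)$ has exactly $k+1$ vertices. Let $B(n,\ell,k)$ be the number of (unordered) forests on $[n]$ consisting of $\ell+1$ rooted trees such that $n$ is a leaf, and such that the sum of $|\mathrm{MD}(T)|$ over all trees $T$ of the forest other than the one containing $n$ equals $k$. Then $A(n,\ell,k)=B(n,\ell,k)$.
   Context: A rooted tree on a finite set is a tree on that set with a distinguished root; parent/child and leaves are taken with respect to the root (a leaf has no children). A rooted tree is decreasing if every nonleaf is greater than all of its children. For a rooted tree $T$, $\mathrm{MD}(T)$ denotes the maximal decreasing subtree of $T$: the maximal subtree of $T$ having the same root as $T$ that is decreasing; $|\mathrm{MD}(T)|$ is its number of vertices. A forest on $[n]$ is a set of rooted trees whose vertex sets partition $[n]$. *)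

theory Defs
  imports Main
begin

text \<open>A rooted forest on [n] = {1..n} is encoded by its parent map
  par :: nat \<Rightarrow> nat option: par v = Some u means u is the parent of v,
  par v = None means v is a root (or v is outside [n]).\<close>

definition par_edges :: "(nat \<Rightarrow> nat option) \<Rightarrow> (nat \<times> nat) set" where
  "par_edges par = {(v, u). par v = Some u}"

definition roots :: "nat \<Rightarrow> (nat \<Rightarrow> nat option) \<Rightarrow> nat set" where
  "roots n par = {r \<in> {1..n}. par r = None}"

definition forest_on :: "nat \<Rightarrow> (nat \<Rightarrow> nat option) \<Rightarrow> bool" where
  "forest_on n par \<longleftrightarrow>
     (\<forall>v. v \<notin> {1..n} \<longrightarrow> par v = None) \<and>
     (\<forall>v \<in> {1..n}. \<forall>u. par v = Some u \<longrightarrow> u \<in> {1..n}) \<and>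
     (\<forall>v \<in> {1..n}. \<exists>r \<in> roots n par. (v, r) \<in> (par_edges par)\<^sup>*)"

definition rooted_tree_on :: "nat \<Rightarrow> (nat \<Rightarrow> nat option) \<Rightarrow> bool" where
  "rooted_tree_on n par \<longleftrightarrow> forest_on n par \<and> card (roots n par) = 1"

definition children :: "(nat \<Rightarrow> nat option) \<Rightarrow> nat \<Rightarrow> nat set" where
  "children par v = {c. par c = Some v}"

definition root_of :: "nat \<Rightarrow> (nat \<Rightarrow> nat option) \<Rightarrow> nat \<Rightarrow> nat" where
  "root_of n par v = (THE r. r \<in> roots n par \<and> (v, r) \<in> (par_edges par)\<^sup>*)"

text \<open>S is the vertex set of a decreasing subtree, with root r, of the tree rooted
  at r: S lies in that tree, contains r, is closed under taking parents
  (so it induces a subtree with the same root), and every vertex of S other than r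
  is smaller than its parent (i.e. every nonleaf of the subtree is greater than
  all its children in the subtree).\<close>
definition decreasing_subtree :: "(nat \<Rightarrow> nat option) \<Rightarrow> nat \<Rightarrow> nat set \<Rightarrow> bool" where
  "decreasing_subtree par r S \<longleftrightarrow>
     r \<in> S \<and> (\<forall>v \<in> S. (v, r) \<in> (par_edges par)\<^sup>*) \<and>
     (\<forall>v \<in> S. \<forall>u. par v = Some u \<longrightarrow> u \<in> S \<and> v < u)"

text \<open>Vertex set of MD of the tree rooted at r: the maximal decreasing subtree
  (the union of all decreasing subtrees, which is itself the largest one).\<close>
definition MD :: "(nat \<Rightarrow> nat option) \<Rightarrow> nat \<Rightarrow> nat set" where
  "MD par r = \<Union> {S. decreasing_subtree par r S}"

definition A_count :: "nat \<Rightarrow> nat \<Rightarrow> nat \<Rightarrow> nat" where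
  "A_count n l k = card {par. rooted_tree_on n par \<and>
      (\<forall>r \<in> roots n par.
         card {c \<in> children par r. c < r} = l \<and> card (MD par r) = k + 1)}"

definition B_count :: "nat \<Rightarrow> nat \<Rightarrow> nat \<Rightarrow> nat" where
  "B_count n l k = card {par. forest_on n par \<and> card (roots n par) = l + 1 \<and>
      children par n = {} \<and>
      (\<Sum>r \<in> roots n par - {root_of n par n}. card (MD par r)) = k}"

end

theory Submission
  imports Defs "HOL-Combinatorics.Transposition"
begin

text \<open>Both counts satisfy the same recurrence, obtained by removing the vertex \<open>n\<close>.

  For \<open>A\<close>, where \<open>n\<close> is the largest label: either \<open>n\<close> is the root, and deleting it leaves a
  forest of \<open>\<ell>\<close> trees whose maximal decreasing subtrees have \<open>k\<close> vertices in total; or \<open>n\<close> has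
  a parent \<open>p\<close>, and since \<open>n\<close> is the largest label, cutting off the subtree of \<open>n\<close> changes
  neither the children of the root below the root nor \<open>MD\<close>. What remains is a tree counted by
  \<open>A\<close> on a smaller vertex set \<open>Z \<ni> p\<close>, plus a tree on the complement of \<open>Z\<close> rooted at \<open>n\<close>.

  For \<open>B\<close>, where \<open>n\<close> is a leaf: either \<open>n\<close> is an isolated root, and deleting it leaves the
  same forests as above; or \<open>n\<close> has a parent \<open>x\<close>, and cutting out the subtree of \<open>x\<close> without
  \<open>n\<close>, with \<open>n\<close> taking the place of \<open>x\<close>, leaves a forest counted by \<open>B\<close> on a smaller set.

  All these numbers depend only on the number of vertices (relabel monotonically), so with
  \<open>t(m)\<close> the number of trees on \<open>m\<close> vertices with a prescribed root,
  \<open>a(n) = f + \<Sum>\<^sub>z (n-1 choose z) a(z) z t(n-z)\<close> and \<open>b(n) = f + \<Sum>\<^sub>z (n-1 choose z) z t(z) b(n-z)\<close>.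
  As \<open>(n-1 choose z) z = (n-1 choose n-z) (n-z)\<close>, the substitution \<open>z \<mapsto> n - z\<close> turns one
  recurrence into the other, and \<open>a(n) = b(n)\<close> follows by induction on \<open>n\<close>.\<close>

section \<open>Forests on an arbitrary vertex set\<close>

lemma par_edges_iff [simp]: "(v, u) \<in> par_edges par \<longleftrightarrow> par v = Some u"
  by (simp add: par_edges_def)

definition roots_in :: "nat set \<Rightarrow> (nat \<Rightarrow> nat option) \<Rightarrow> nat set" where
  "roots_in V par = {r \<in> V. par r = None}"

definition forest_in :: "nat set \<Rightarrow> (nat \<Rightarrow> nat option) \<Rightarrow> bool" where
  "forest_in V par \<longleftrightarrow> (\<forall>v. v \<notin> V \<longrightarrow> par v = None) \<and>
     (\<forall>v \<in> V. \<forall>u. par v = Some u \<longrightarrow> u \<in> V) \<and>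
     (\<forall>v \<in> V. \<exists>r \<in> roots_in V par. (v, r) \<in> (par_edges par)\<^sup>*)"

definition root_in :: "nat set \<Rightarrow> (nat \<Rightarrow> nat option) \<Rightarrow> nat \<Rightarrow> nat" where
  "root_in V par v = (THE r. r \<in> roots_in V par \<and> (v, r) \<in> (par_edges par)\<^sup>*)"

lemma roots_eq_roots_in: "roots n par = roots_in {1..n} par"
  unfolding roots_def roots_in_def by simp

lemma forest_on_iff_forest_in: "forest_on n par \<longleftrightarrow> forest_in {1..n} par"
  unfolding forest_on_def forest_in_def roots_eq_roots_in ..

lemma root_of_eq_root_in: "root_of n par v = root_in {1..n} par v"
  unfolding root_of_def root_in_def roots_eq_roots_in ..

lemma reach_first_step:
  assumes "(v, r) \<in> (par_edges par)\<^sup>*" "v \<noteq> r"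
  shows "\<exists>u. par v = Some u \<and> (u, r) \<in> (par_edges par)\<^sup>*"
  using assms by (induction rule: converse_rtrancl_induct) auto

lemma reach_from_parentless:
  assumes "par r = None" "(r, w) \<in> (par_edges par)\<^sup>*"
  shows "w = r"
  using assms(2,1) by (induction rule: converse_rtrancl_induct) auto

lemma reach_comparable:
  assumes "(v, a) \<in> (par_edges par)\<^sup>*" "(v, b) \<in> (par_edges par)\<^sup>*"
  shows "(a, b) \<in> (par_edges par)\<^sup>* \<or> (b, a) \<in> (par_edges par)\<^sup>*"
  using assms
proof (induction arbitrary: b rule: converse_rtrancl_induct)
  case base
  then show ?case by simp
next
  case (step v w)
  show ?case
  proof (cases "b = v")
    case True
    then show ?thesis using step by (meson converse_rtrancl_into_rtrancl)
  next
    case False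
    then obtain u where "par v = Some u" "(u, b) \<in> (par_edges par)\<^sup>*"
      using reach_first_step[OF step.prems] by blast
    then show ?thesis using step by auto
  qed
qed

lemma reach_around_cycle:
  assumes "(u, u) \<in> (par_edges par)\<^sup>+" "(u, w) \<in> (par_edges par)\<^sup>*"
  shows "(w, u) \<in> (par_edges par)\<^sup>*"
  using assms(2)
proof (induction rule: rtrancl_induct)
  case base
  then show ?case by simp
next
  case (step w w')
  show ?case
  proof (cases "w = u")
    case True
    from assms(1) obtain x where "(u, x) \<in> par_edges par" "(x, u) \<in> (par_edges par)\<^sup>*"
      using tranclD by metis
    then show ?thesis using step True by auto
  next
    case False
    then obtain y where "par w = Some y" "(y, u) \<in> (par_edges par)\<^sup>*"
      using reach_first_step[OF step.IH] by blast
    then show ?thesis using step by auto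
  qed
qed

lemma finite_roots_in: "finite V \<Longrightarrow> finite (roots_in V par)"
  unfolding roots_in_def by simp

lemma forest_in_closed:
  assumes "forest_in V par" "par v = Some u"
  shows "v \<in> V" "u \<in> V"
  using assms unfolding forest_in_def by (metis option.distinct(1))+

lemma forest_in_outside: "forest_in V par \<Longrightarrow> v \<notin> V \<Longrightarrow> par v = None"
  unfolding forest_in_def by blast

lemma forest_in_reach_root:
  "forest_in V par \<Longrightarrow> v \<in> V \<Longrightarrow> \<exists>r \<in> roots_in V par. (v, r) \<in> (par_edges par)\<^sup>*"
  unfolding forest_in_def by blast

lemma forest_in_acyclic:
  assumes "forest_in V par"
  shows "(u, u) \<notin> (par_edges par)\<^sup>+"
proof
  assume cycle: "(u, u) \<in> (par_edges par)\<^sup>+"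
  then obtain x where x: "par u = Some x" using tranclD by fastforce
  then have "u \<in> V" using forest_in_closed[OF assms] by blast
  then obtain r where r: "r \<in> roots_in V par" "(u, r) \<in> (par_edges par)\<^sup>*"
    using forest_in_reach_root[OF assms] by blast
  have "(r, u) \<in> (par_edges par)\<^sup>*" using reach_around_cycle[OF cycle r(2)] .
  then have "u = r" using reach_from_parentless r(1) unfolding roots_in_def by blast
  then show False using x r(1) unfolding roots_in_def by simp
qed

lemma forest_in_parent_not_below:
  assumes "forest_in V par" "par x = Some u"
  shows "(u, x) \<notin> (par_edges par)\<^sup>*"
  using forest_in_acyclic[OF assms(1), of x] assms(2)
  by (meson par_edges_iff rtrancl_into_trancl2)

lemma reach_root_in_eq:
  assumes "r \<in> roots_in V par" "(r, w) \<in> (par_edges par)\<^sup>*"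
  shows "w = r"
  using assms reach_from_parentless unfolding roots_in_def by blast

lemma root_in_unique:
  assumes "r1 \<in> roots_in V par" "r2 \<in> roots_in V par"
    "(v, r1) \<in> (par_edges par)\<^sup>*" "(v, r2) \<in> (par_edges par)\<^sup>*"
  shows "r1 = r2"
  using reach_comparable[OF assms(3,4)] reach_root_in_eq assms(1,2) by blast

lemma root_in_eqI:
  assumes "r \<in> roots_in V par" "(v, r) \<in> (par_edges par)\<^sup>*"
  shows "root_in V par v = r"
  unfolding root_in_def using assms root_in_unique by blast

lemma root_in:
  assumes "forest_in V par" "v \<in> V"
  shows "root_in V par v \<in> roots_in V par" "(v, root_in V par v) \<in> (par_edges par)\<^sup>*"
  using forest_in_reach_root[OF assms] root_in_eqI by metis+

lemma finite_forests_in: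
  assumes "finite V"
  shows "finite {par. forest_in V par \<and> P par}"
proof (rule finite_subset)
  let ?M = "{f. \<forall>x. (x \<in> V \<longrightarrow> f x \<in> insert None (Some ` V)) \<and> (x \<notin> V \<longrightarrow> f x = None)}"
  show "finite ?M" by (rule finite_set_of_finite_funs) (use assms in auto)
  show "{par. forest_in V par \<and> P par} \<subseteq> ?M"
  proof (intro subsetI CollectI allI conjI impI)
    fix par x
    assume "par \<in> {par. forest_in V par \<and> P par}"
    then have F: "forest_in V par" by blast
    show "par x = None" if "x \<notin> V" using forest_in_outside[OF F that] by simp
    show "par x \<in> insert None (Some ` V)" if "x \<in> V"
      using forest_in_closed(2)[OF F] by (cases "par x") auto
  qed
qed

definition descendants :: "(nat \<Rightarrow> nat option) \<Rightarrow> nat \<Rightarrow> nat set" where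
  "descendants par x = {v. (v, x) \<in> (par_edges par)\<^sup>*}"

lemma descendants_self [simp]: "x \<in> descendants par x"
  unfolding descendants_def by simp

lemma descendants_child: "par v = Some u \<Longrightarrow> u \<in> descendants par x \<Longrightarrow> v \<in> descendants par x"
  unfolding descendants_def by (simp add: converse_rtrancl_into_rtrancl)

lemma descendants_parent:
  assumes "v \<in> descendants par x" "v \<noteq> x" "par v = Some u"
  shows "u \<in> descendants par x"
  using reach_first_step[of v x par] assms unfolding descendants_def by auto

lemma descendants_subset:
  assumes "forest_in V par" "x \<in> V"
  shows "descendants par x \<subseteq> V"
proof
  fix v assume v: "v \<in> descendants par x"
  show "v \<in> V"
  proof (cases "v = x")
    case False
    then obtain u where "par v = Some u"
      using reach_first_step[of v x par] v unfolding descendants_def by blast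
    then show ?thesis using forest_in_closed(1)[OF assms(1)] by blast
  qed (use assms in simp)
qed

lemma parent_not_descendant:
  "forest_in V par \<Longrightarrow> par x = Some u \<Longrightarrow> u \<notin> descendants par x"
  using forest_in_parent_not_below unfolding descendants_def by blast

definition trees_rooted :: "nat set \<Rightarrow> nat \<Rightarrow> (nat \<Rightarrow> nat option) set" where
  "trees_rooted S x = {t. forest_in S t \<and> roots_in S t = {x}}"

lemma restrict_trees_rooted:
  assumes x: "x \<in> S"
    and closed: "\<And>v u. v \<in> S - {x} \<Longrightarrow> par v = Some u \<Longrightarrow> u \<in> S"
    and reach: "\<And>v. v \<in> S \<Longrightarrow> (v, x) \<in> (par_edges par)\<^sup>*"
  shows "par |` (S - {x}) \<in> trees_rooted S x"
proof -
  let ?t = "par |` (S - {x})"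
  have reach_t: "(v, x) \<in> (par_edges ?t)\<^sup>*" if "v \<in> S" for v
    using reach[OF that] that
  proof (induction rule: converse_rtrancl_induct)
    case (step v w)
    show ?case
    proof (cases "v = x")
      case False
      have "par v = Some w" using step.hyps(1) by simp
      then have w: "w \<in> S" using closed step.prems False by blast
      have "?t v = Some w" using \<open>par v = Some w\<close> step.prems False by simp
      then show ?thesis using step.IH[OF w] by (meson converse_rtrancl_into_rtrancl par_edges_iff)
    qed simp
  qed simp
  have roots: "roots_in S ?t = {x}"
  proof (intro equalityI subsetI)
    fix v assume v: "v \<in> roots_in S ?t"
    show "v \<in> {x}"
    proof (rule ccontr)
      assume "v \<notin> {x}"
      then have "v \<in> S - {x}" "?t v = None" using v unfolding roots_in_def by auto
      moreover obtain u where "par v = Some u"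
        using reach_first_step[OF reach] \<open>v \<in> S - {x}\<close> by blast
      ultimately show False by simp
    qed
  qed (use x in \<open>simp add: roots_in_def\<close>)
  have "forest_in S ?t"
    unfolding forest_in_def
  proof (intro conjI allI ballI impI)
    show "?t v = None" if "v \<notin> S" for v using that by simp
    show "u \<in> S" if "v \<in> S" "?t v = Some u" for v u
    proof -
      have "v \<in> S - {x}" "par v = Some u" using that by (auto simp: restrict_map_def split: if_splits)
      then show ?thesis by (rule closed)
    qed
    show "\<exists>r \<in> roots_in S ?t. (v, r) \<in> (par_edges ?t)\<^sup>*" if "v \<in> S" for v
      using reach_t[OF that] roots by blast
  qed
  then show ?thesis unfolding trees_rooted_def using roots by blast
qed

definition rooted_trees :: "nat set \<Rightarrow> (nat \<Rightarrow> nat option) set" where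
  "rooted_trees S = {t. forest_in S t \<and> card (roots_in S t) = 1}"

lemma rooted_trees_eq_Union: "rooted_trees S = (\<Union>x\<in>S. trees_rooted S x)"
proof (intro equalityI subsetI)
  fix t assume "t \<in> rooted_trees S"
  then obtain x where "forest_in S t" "roots_in S t = {x}"
    unfolding rooted_trees_def by (auto simp: card_1_singleton_iff)
  moreover then have "x \<in> S" unfolding roots_in_def by auto
  ultimately show "t \<in> (\<Union>x\<in>S. trees_rooted S x)" unfolding trees_rooted_def by blast
qed (auto simp: rooted_trees_def trees_rooted_def)


subsection \<open>Maximal decreasing subtrees\<close>

definition dec_edges :: "(nat \<Rightarrow> nat option) \<Rightarrow> (nat \<times> nat) set" where
  "dec_edges par = {(v, u). par v = Some u \<and> v < u}"

lemma dec_edges_iff [simp]: "(v, u) \<in> dec_edges par \<longleftrightarrow> par v = Some u \<and> v < u"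
  by (simp add: dec_edges_def)

definition dec_descendants :: "(nat \<Rightarrow> nat option) \<Rightarrow> nat \<Rightarrow> nat set" where
  "dec_descendants par r = {v. (v, r) \<in> (dec_edges par)\<^sup>*}"

lemma dec_reach_imp_reach: "(v, r) \<in> (dec_edges par)\<^sup>* \<Longrightarrow> (v, r) \<in> (par_edges par)\<^sup>*"
  by (induction rule: rtrancl_induct) (auto intro: rtrancl_into_rtrancl)

lemma dec_descendants_subset:
  assumes "forest_in V par" "r \<in> V"
  shows "dec_descendants par r \<subseteq> V"
proof -
  have "dec_descendants par r \<subseteq> descendants par r"
    unfolding dec_descendants_def descendants_def using dec_reach_imp_reach by blast
  then show ?thesis using descendants_subset[OF assms] by blast
qed

lemma MD_eq_dec_descendants:
  assumes "par r = None"
  shows "MD par r = dec_descendants par r"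
proof
  show "MD par r \<subseteq> dec_descendants par r"
  proof
    fix v assume "v \<in> MD par r"
    then obtain S where S: "decreasing_subtree par r S" "v \<in> S" unfolding MD_def by blast
    have "(v, r) \<in> (par_edges par)\<^sup>*" using S unfolding decreasing_subtree_def by blast
    then have "v \<in> S \<longrightarrow> (v, r) \<in> (dec_edges par)\<^sup>*"
    proof (induction rule: converse_rtrancl_induct)
      case (step v w)
      show ?case
      proof
        assume "v \<in> S"
        with S(1) step(1) have "w \<in> S" "v < w" unfolding decreasing_subtree_def by auto
        then show "(v, r) \<in> (dec_edges par)\<^sup>*"
          using step by (meson converse_rtrancl_into_rtrancl dec_edges_iff par_edges_iff)
      qed
    qed simp
    then show "v \<in> dec_descendants par r" using S unfolding dec_descendants_def by blast
  qed
next
  have "decreasing_subtree par r (dec_descendants par r)"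
    unfolding decreasing_subtree_def dec_descendants_def
  proof (intro conjI ballI allI impI)
    fix v assume v: "v \<in> {v. (v, r) \<in> (dec_edges par)\<^sup>*}"
    then show "(v, r) \<in> (par_edges par)\<^sup>*" using dec_reach_imp_reach by blast
    fix u assume u: "par v = Some u"
    then have "v \<noteq> r" using assms by auto
    then obtain w where "(v, w) \<in> dec_edges par" "(w, r) \<in> (dec_edges par)\<^sup>*"
      using v by (metis converse_rtranclE mem_Collect_eq)
    then show "u \<in> {v. (v, r) \<in> (dec_edges par)\<^sup>*}" "v < u" using u by auto
  qed simp
  then show "dec_descendants par r \<subseteq> MD par r" unfolding MD_def by blast
qed

lemma dec_descendants_unfold:
  "dec_descendants par r = insert r (\<Union>c\<in>{c. par c = Some r \<and> c < r}. dec_descendants par c)"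
proof (intro equalityI subsetI)
  fix v assume "v \<in> dec_descendants par r"
  then have "(v, r) \<in> (dec_edges par)\<^sup>*" unfolding dec_descendants_def by simp
  then show "v \<in> insert r (\<Union>c\<in>{c. par c = Some r \<and> c < r}. dec_descendants par c)"
  proof (cases rule: rtranclE)
    case (step c)
    then show ?thesis unfolding dec_descendants_def by auto
  qed simp
next
  fix v assume "v \<in> insert r (\<Union>c\<in>{c. par c = Some r \<and> c < r}. dec_descendants par c)"
  then show "v \<in> dec_descendants par r"
  proof
    assume "v \<in> (\<Union>c\<in>{c. par c = Some r \<and> c < r}. dec_descendants par c)"
    then obtain c where "par c = Some r" "c < r" "(v, c) \<in> (dec_edges par)\<^sup>*"
      unfolding dec_descendants_def by auto
    then show ?thesis unfolding dec_descendants_def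
      by (meson dec_edges_iff mem_Collect_eq rtrancl.rtrancl_into_rtrancl)
  qed (simp add: dec_descendants_def)
qed

lemma dec_descendants_subset_cong:
  assumes "r \<in> S" "\<forall>v \<in> S - {r}. par' v = par v"
    and "\<forall>v u. par v = Some u \<longrightarrow> u \<in> S \<longrightarrow> v < u \<longrightarrow> v \<in> S"
  shows "dec_descendants par r \<subseteq> S \<inter> dec_descendants par' r"
proof
  fix v assume "v \<in> dec_descendants par r"
  then have "(v, r) \<in> (dec_edges par)\<^sup>*" unfolding dec_descendants_def by simp
  then have "v \<in> S \<and> (v, r) \<in> (dec_edges par')\<^sup>*"
  proof (induction rule: converse_rtrancl_induct)
    case (step v w)
    then have "v \<in> S" using assms(3) by auto
    show ?case
    proof (cases "v = r")
      case False
      then have "(v, w) \<in> dec_edges par'" using step assms(2) \<open>v \<in> S\<close> by auto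
      then show ?thesis using step \<open>v \<in> S\<close> by (meson converse_rtrancl_into_rtrancl)
    qed (use \<open>v \<in> S\<close> in simp)
  qed (use assms(1) in simp)
  then show "v \<in> S \<inter> dec_descendants par' r" unfolding dec_descendants_def by simp
qed

lemma dec_descendants_cong:
  assumes "r \<in> S" "\<forall>v \<in> S - {r}. par' v = par v"
    and "\<forall>v u. par v = Some u \<longrightarrow> u \<in> S \<longrightarrow> v < u \<longrightarrow> v \<in> S"
    and "\<forall>v u. par' v = Some u \<longrightarrow> u \<in> S \<longrightarrow> v < u \<longrightarrow> v \<in> S"
  shows "dec_descendants par r = dec_descendants par' r"
proof -
  have "\<forall>v \<in> S - {r}. par v = par' v" using assms(2) by simp
  then show ?thesis
    using dec_descendants_subset_cong[OF assms(1-3)] dec_descendants_subset_cong[OF assms(1) _ assms(4)]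
    by blast
qed

lemma MD_cong:
  assumes "par r = None" "par' r = None" "r \<in> S" "\<forall>v \<in> S - {r}. par' v = par v"
    and "\<forall>v u. par v = Some u \<longrightarrow> u \<in> S \<longrightarrow> v < u \<longrightarrow> v \<in> S"
    and "\<forall>v u. par' v = Some u \<longrightarrow> u \<in> S \<longrightarrow> v < u \<longrightarrow> v \<in> S"
  shows "MD par r = MD par' r"
  using MD_eq_dec_descendants[of par, OF assms(1)] MD_eq_dec_descendants[of par', OF assms(2)]
    dec_descendants_cong[OF assms(3-6)] by simp


section \<open>Relabelling vertices\<close>

definition relabel :: "(nat \<Rightarrow> nat) \<Rightarrow> nat set \<Rightarrow> (nat \<Rightarrow> nat option) \<Rightarrow> (nat \<Rightarrow> nat option)" where
  "relabel h V par = (\<lambda>w. if w \<in> h ` V then map_option h (par (inv_into V h w)) else None)"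

context
  fixes h :: "nat \<Rightarrow> nat" and V and par :: "nat \<Rightarrow> nat option"
  assumes inj: "inj_on h V" and forest: "forest_in V par"
begin

lemma relabel_apply: "v \<in> V \<Longrightarrow> relabel h V par (h v) = map_option h (par v)"
  unfolding relabel_def using inj by simp

lemma relabel_edge: "v \<in> V \<Longrightarrow> par v = Some u \<Longrightarrow> relabel h V par (h v) = Some (h u)"
  using relabel_apply by simp

lemma relabel_SomeE:
  assumes "relabel h V par w = Some u'"
  obtains v u where "v \<in> V" "u \<in> V" "w = h v" "u' = h u" "par v = Some u"
proof -
  obtain v where v: "v \<in> V" "w = h v"
    using assms unfolding relabel_def by (auto split: if_splits)
  then obtain u where "par v = Some u" "u' = h u" using assms relabel_apply by auto
  then show thesis using that v forest_in_closed(2)[OF forest] by blast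
qed

lemma reach_relabel:
  "(v, r) \<in> (par_edges par)\<^sup>* \<Longrightarrow> v \<in> V \<Longrightarrow> (h v, h r) \<in> (par_edges (relabel h V par))\<^sup>*"
proof (induction rule: converse_rtrancl_induct)
  case (step v w)
  then have "w \<in> V" using forest_in_closed[OF forest] by auto
  then show ?case using step relabel_edge[of v w]
    by (meson converse_rtrancl_into_rtrancl par_edges_iff)
qed simp

lemma roots_in_relabel: "roots_in (h ` V) (relabel h V par) = h ` roots_in V par"
  unfolding roots_in_def using relabel_apply by force

lemma forest_in_relabel: "forest_in (h ` V) (relabel h V par)"
  unfolding forest_in_def
proof (intro conjI ballI allI impI)
  show "relabel h V par v = None" if "v \<notin> h ` V" for v
    using that unfolding relabel_def by simp
  show "u \<in> h ` V" if "relabel h V par v = Some u" for v u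
    using that by (elim relabel_SomeE) blast
  fix v assume "v \<in> h ` V"
  then obtain x where x: "x \<in> V" "v = h x" by blast
  then obtain r where "r \<in> roots_in V par" "(x, r) \<in> (par_edges par)\<^sup>*"
    using forest_in_reach_root[OF forest] by blast
  then show "\<exists>r \<in> roots_in (h ` V) (relabel h V par). (v, r) \<in> (par_edges (relabel h V par))\<^sup>*"
    using roots_in_relabel reach_relabel x by blast
qed

lemma children_relabel: "x \<in> V \<Longrightarrow> children (relabel h V par) (h x) = h ` children par x"
  unfolding children_def
proof safe
  fix c assume "x \<in> V" "relabel h V par c = Some (h x)"
  then show "c \<in> h ` {c. par c = Some x}"
    by (elim relabel_SomeE) (use inj in \<open>auto dest: inj_onD\<close>)
next
  fix c assume "x \<in> V" "par c = Some x"
  then show "relabel h V par (h c) = Some (h x)"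
    using relabel_edge forest_in_closed[OF forest] by blast
qed

lemma relabel_inv_into: "relabel (inv_into V h) (h ` V) (relabel h V par) = par"
proof
  fix w
  show "relabel (inv_into V h) (h ` V) (relabel h V par) w = par w"
  proof (cases "w \<in> V")
    case True
    have "inv_into (h ` V) (inv_into V h) w = h w"
      by (rule inv_into_f_eq) (use inj True in \<open>auto simp: inj_on_inv_into\<close>)
    then have "relabel (inv_into V h) (h ` V) (relabel h V par) w
        = map_option (inv_into V h) (relabel h V par (h w))"
      unfolding relabel_def using True inj by simp
    also have "\<dots> = par w" using relabel_apply[OF True] True inj forest
      by (cases "par w") (auto dest: forest_in_closed)
    finally show ?thesis .
  next
    case False
    then show ?thesis unfolding relabel_def using inj forest_in_outside[OF forest False] by auto
  qed
qed

lemma root_in_relabel: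
  assumes "v \<in> V"
  shows "root_in (h ` V) (relabel h V par) (h v) = h (root_in V par v)"
proof (rule root_in_eqI)
  show "h (root_in V par v) \<in> roots_in (h ` V) (relabel h V par)"
    using roots_in_relabel root_in(1)[OF forest assms] by blast
  show "(h v, h (root_in V par v)) \<in> (par_edges (relabel h V par))\<^sup>*"
    using reach_relabel root_in(2)[OF forest assms] assms by blast
qed

end

lemma relabel_cong:
  assumes "\<forall>x \<in> V. h x = h' x" "forest_in V par"
  shows "relabel h V par = relabel h' V par"
proof
  fix w
  have image: "h ` V = h' ` V" using assms(1) by force
  have "(\<lambda>x. x \<in> V \<and> h x = w) = (\<lambda>x. x \<in> V \<and> h' x = w)" using assms(1) by auto
  then have inv: "inv_into V h w = inv_into V h' w" by (simp add: inv_into_def)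
  show "relabel h V par w = relabel h' V par w"
  proof (cases "w \<in> h ` V")
    case True
    then have "inv_into V h w \<in> V" by (simp add: inv_into_into)
    then have "\<forall>u. par (inv_into V h w) = Some u \<longrightarrow> u \<in> V"
      using forest_in_closed(2)[OF assms(2)] by blast
    then show ?thesis unfolding relabel_def using True image inv assms(1)
      by (cases "par (inv_into V h w)") auto
  qed (simp add: relabel_def image)
qed

lemma card_eq_by_relabel:
  assumes inj: "inj_on h V"
    and S: "\<And>par. par \<in> S \<Longrightarrow> forest_in V par \<and> relabel h V par \<in> S'"
    and S': "\<And>q. q \<in> S' \<Longrightarrow> forest_in (h ` V) q \<and> relabel (inv_into V h) (h ` V) q \<in> S"
  shows "card S = card S'"
proof -
  let ?g = "inv_into V h"
  have inj_g: "inj_on ?g (h ` V)" by (simp add: inj_on_inv_into)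
  have g_image: "?g ` h ` V = V" using inj by simp
  have "bij_betw (relabel h V) S S'"
  proof (rule bij_betw_byWitness[where f' = "relabel ?g (h ` V)"])
    show "\<forall>par \<in> S. relabel ?g (h ` V) (relabel h V par) = par"
      using relabel_inv_into[OF inj] S by blast
    show "\<forall>q \<in> S'. relabel h V (relabel ?g (h ` V) q) = q"
    proof
      fix q assume q: "q \<in> S'"
      then have forest_q: "forest_in (h ` V) q" using S' by blast
      have forest_gq: "forest_in V (relabel ?g (h ` V) q)"
        using forest_in_relabel[OF inj_g forest_q] g_image by simp
      have "\<forall>x \<in> V. h x = inv_into (h ` V) ?g x" using inj
        by (metis imageI inv_into_f_eq inv_into_into inj_g)
      then have "relabel h V (relabel ?g (h ` V) q) = relabel (inv_into (h ` V) ?g) V (relabel ?g (h ` V) q)"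
        using relabel_cong forest_gq by blast
      also have "\<dots> = q" using relabel_inv_into[OF inj_g forest_q] g_image by simp
      finally show "relabel h V (relabel ?g (h ` V) q) = q" .
    qed
  qed (use S S' in blast)+
  then show ?thesis by (rule bij_betw_same_card)
qed


lemma strict_mono_on_inv_into:
  fixes h :: "nat \<Rightarrow> nat"
  assumes "strict_mono_on V h"
  shows "strict_mono_on (h ` V) (inv_into V h)"
proof (rule strict_mono_onI)
  fix x y assume xy: "x \<in> h ` V" "y \<in> h ` V" "x < y"
  then obtain a b where ab: "a \<in> V" "b \<in> V" "x = h a" "y = h b" by blast
  have "inj_on h V" using strict_mono_on_imp_inj_on[OF assms] .
  then have "inv_into V h x = a" "inv_into V h y = b" using ab by auto
  moreover have "a < b" using xy ab strict_mono_onD[OF assms, of b a] by (metis not_less_iff_gr_or_eq)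
  ultimately show "inv_into V h x < inv_into V h y" by simp
qed

lemma dec_reach_relabel:
  assumes "strict_mono_on V h" "forest_in V par"
  shows "(v, r) \<in> (dec_edges par)\<^sup>* \<Longrightarrow> v \<in> V \<Longrightarrow> (h v, h r) \<in> (dec_edges (relabel h V par))\<^sup>*"
proof (induction rule: converse_rtrancl_induct)
  case (step v w)
  then have "w \<in> V" using forest_in_closed[OF assms(2)] by auto
  then have "(h v, h w) \<in> dec_edges (relabel h V par)"
    using step relabel_apply[OF strict_mono_on_imp_inj_on[OF assms(1)] assms(2), of v] assms(1)
    by (simp add: strict_mono_on_def)
  then show ?case using step \<open>w \<in> V\<close> by (meson converse_rtrancl_into_rtrancl)
qed simp

lemma dec_descendants_relabel:
  assumes mono: "strict_mono_on V h" and forest: "forest_in V par" and r: "r \<in> V"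
  shows "dec_descendants (relabel h V par) (h r) = h ` dec_descendants par r"
proof
  have "dec_descendants par r \<subseteq> V" using dec_descendants_subset[OF forest r] .
  then show "h ` dec_descendants par r \<subseteq> dec_descendants (relabel h V par) (h r)"
    using dec_reach_relabel[OF mono forest] unfolding dec_descendants_def by auto
next
  let ?g = "inv_into V h" and ?q = "relabel h V par"
  have inj: "inj_on h V" using strict_mono_on_imp_inj_on[OF mono] .
  have forest_q: "forest_in (h ` V) ?q" by (rule forest_in_relabel[OF inj forest])
  have mono_g: "strict_mono_on (h ` V) ?g" using strict_mono_on_inv_into[OF mono] .
  show "dec_descendants ?q (h r) \<subseteq> h ` dec_descendants par r"
  proof
    fix w assume w: "w \<in> dec_descendants ?q (h r)"
    then have "w \<in> h ` V" using dec_descendants_subset[OF forest_q] r by blast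
    moreover have "(?g w, ?g (h r)) \<in> (dec_edges (relabel ?g (h ` V) ?q))\<^sup>*"
      using dec_reach_relabel[OF mono_g forest_q] w calculation unfolding dec_descendants_def by blast
    then have "?g w \<in> dec_descendants par r"
      using relabel_inv_into[OF inj forest] inj r unfolding dec_descendants_def by simp
    ultimately show "w \<in> h ` dec_descendants par r" by (metis f_inv_into_f imageI)
  qed
qed

lemma card_MD_relabel:
  assumes mono: "strict_mono_on V h" and forest: "forest_in V par" and r: "r \<in> roots_in V par"
  shows "card (MD (relabel h V par) (h r)) = card (MD par r)"
proof -
  have inj: "inj_on h V" using strict_mono_on_imp_inj_on[OF mono] .
  have rV: "r \<in> V" and root: "par r = None" using r unfolding roots_in_def by auto
  then have "relabel h V par (h r) = None" using relabel_apply[OF inj forest rV] by simp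
  then have "MD (relabel h V par) (h r) = h ` MD par r"
    using MD_eq_dec_descendants[of "relabel h V par"] MD_eq_dec_descendants[of par, OF root]
      dec_descendants_relabel[OF mono forest rV] by simp
  moreover have "MD par r \<subseteq> V"
    using MD_eq_dec_descendants[of par, OF root] dec_descendants_subset[OF forest rV] by simp
  ultimately show ?thesis using inj by (simp add: card_image inj_on_subset)
qed

definition rank :: "nat set \<Rightarrow> nat \<Rightarrow> nat" where
  "rank Z v = card {u \<in> Z. u \<le> v}"

lemma strict_mono_on_rank: "finite Z \<Longrightarrow> strict_mono_on Z (rank Z)"
proof (rule strict_mono_onI)
  fix r s assume "finite Z" "r \<in> Z" "s \<in> Z" "r < s"
  then have "{u \<in> Z. u \<le> r} \<subseteq> {u \<in> Z. u \<le> s}" "s \<in> {u \<in> Z. u \<le> s} - {u \<in> Z. u \<le> r}"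
    by auto
  then have "{u \<in> Z. u \<le> r} \<subset> {u \<in> Z. u \<le> s}" by blast
  then show "rank Z r < rank Z s" unfolding rank_def using \<open>finite Z\<close> by (simp add: psubset_card_mono)
qed

lemma rank_image: "finite Z \<Longrightarrow> rank Z ` Z = {1..card Z}"
proof -
  assume fin: "finite Z"
  have "rank Z ` Z \<subseteq> {1..card Z}"
  proof
    fix y assume "y \<in> rank Z ` Z"
    then obtain v where v: "v \<in> Z" "y = rank Z v" by blast
    then have "{u \<in> Z. u \<le> v} \<noteq> {}" by auto
    then show "y \<in> {1..card Z}"
      unfolding v rank_def using fin by (simp add: Suc_leI card_gt_0_iff card_mono)
  qed
  moreover have "card (rank Z ` Z) = card Z"
    using strict_mono_on_imp_inj_on[OF strict_mono_on_rank[OF fin]] by (simp add: card_image)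
  ultimately show ?thesis by (simp add: card_subset_eq)
qed

lemma rank_Max:
  assumes "finite Z" "Z \<noteq> {}"
  shows "rank Z (Max Z) = card Z"
proof -
  have "{u \<in> Z. u \<le> Max Z} = Z" using assms by auto
  then show ?thesis unfolding rank_def by simp
qed


section \<open>The counted families on an arbitrary vertex set\<close>

definition A_trees :: "nat \<Rightarrow> nat \<Rightarrow> nat set \<Rightarrow> (nat \<Rightarrow> nat option) set" where
  "A_trees l k V = {par. forest_in V par \<and> card (roots_in V par) = 1 \<and>
      (\<forall>r \<in> roots_in V par. card {c \<in> children par r. c < r} = l \<and> card (MD par r) = k + 1)}"

definition B_forests :: "nat \<Rightarrow> nat \<Rightarrow> nat set \<Rightarrow> nat \<Rightarrow> (nat \<Rightarrow> nat option) set" where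
  "B_forests l k V x = {par. forest_in V par \<and> card (roots_in V par) = l + 1 \<and> children par x = {} \<and>
      (\<Sum>r \<in> roots_in V par - {root_in V par x}. card (MD par r)) = k}"

definition MD_forests :: "nat \<Rightarrow> nat \<Rightarrow> nat set \<Rightarrow> (nat \<Rightarrow> nat option) set" where
  "MD_forests l k V = {par. forest_in V par \<and> card (roots_in V par) = l \<and>
      (\<Sum>r \<in> roots_in V par. card (MD par r)) = k}"

lemma A_count_eq_card_A_trees: "A_count n l k = card (A_trees l k {1..n})"
  unfolding A_count_def A_trees_def rooted_tree_on_def forest_on_iff_forest_in roots_eq_roots_in
  by (simp add: conj_assoc)

lemma B_count_eq_card_B_forests: "B_count n l k = card (B_forests l k {1..n} n)"
  unfolding B_count_def B_forests_def forest_on_iff_forest_in roots_eq_roots_in root_of_eq_root_in ..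

lemma A_trees_relabel:
  assumes mono: "strict_mono_on V h" and par: "par \<in> A_trees l k V"
  shows "relabel h V par \<in> A_trees l k (h ` V)"
proof -
  have inj: "inj_on h V" using strict_mono_on_imp_inj_on[OF mono] .
  have forest: "forest_in V par" using par unfolding A_trees_def by blast
  have roots: "roots_in (h ` V) (relabel h V par) = h ` roots_in V par"
    by (rule roots_in_relabel[OF inj forest])
  have roots_V: "roots_in V par \<subseteq> V" unfolding roots_in_def by blast
  have "card (roots_in (h ` V) (relabel h V par)) = 1" using roots par inj roots_V
    unfolding A_trees_def by (simp add: card_image inj_on_subset)
  moreover have "card {c \<in> children (relabel h V par) (h r). c < h r} = l \<and>
      card (MD (relabel h V par) (h r)) = k + 1" if r: "r \<in> roots_in V par" for r
  proof -
    have rV: "r \<in> V" using r roots_V by blast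
    have children_V: "children par r \<subseteq> V"
      unfolding children_def using forest_in_closed(1)[OF forest] by blast
    have "{c \<in> children (relabel h V par) (h r). c < h r} = h ` {c \<in> children par r. c < r}"
      using children_relabel[OF inj forest rV] children_V rV mono
      by (auto simp: strict_mono_on_less subset_iff)
    then have "card {c \<in> children (relabel h V par) (h r). c < h r} = card {c \<in> children par r. c < r}"
      using inj children_V by (simp add: card_image inj_on_subset subset_iff)
    then show ?thesis using card_MD_relabel[OF mono forest r] par r unfolding A_trees_def by auto
  qed
  ultimately show ?thesis unfolding A_trees_def using forest_in_relabel[OF inj forest] roots by auto
qed

lemma B_forests_relabel:
  assumes mono: "strict_mono_on V h" and par: "par \<in> B_forests l k V x" and x: "x \<in> V"
  shows "relabel h V par \<in> B_forests l k (h ` V) (h x)"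
proof -
  let ?q = "relabel h V par" and ?R = "roots_in V par - {root_in V par x}"
  have inj: "inj_on h V" using strict_mono_on_imp_inj_on[OF mono] .
  have forest: "forest_in V par" using par unfolding B_forests_def by blast
  have roots: "roots_in (h ` V) ?q = h ` roots_in V par" by (rule roots_in_relabel[OF inj forest])
  have roots_V: "roots_in V par \<subseteq> V" unfolding roots_in_def by blast
  have inj_R: "inj_on h (roots_in V par)" using inj roots_V by (rule inj_on_subset)
  have "card (roots_in (h ` V) ?q) = l + 1"
    using roots par inj_R unfolding B_forests_def by (simp add: card_image)
  moreover have "children ?q (h x) = {}"
    using children_relabel[OF inj forest x] par unfolding B_forests_def by simp
  moreover have "(\<Sum>r \<in> roots_in (h ` V) ?q - {root_in (h ` V) ?q (h x)}. card (MD ?q r)) = k"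
  proof -
    have "roots_in (h ` V) ?q - {root_in (h ` V) ?q (h x)} = h ` ?R"
      using roots root_in_relabel[OF inj forest x] root_in(1)[OF forest x] inj_R
      by (simp add: inj_on_image_set_diff)
    then have "(\<Sum>r \<in> roots_in (h ` V) ?q - {root_in (h ` V) ?q (h x)}. card (MD ?q r))
        = (\<Sum>r \<in> ?R. card (MD ?q (h r)))"
      using inj_R by (simp add: sum.reindex inj_on_subset)
    also have "\<dots> = (\<Sum>r \<in> ?R. card (MD par r))"
      using card_MD_relabel[OF mono forest] by simp
    finally show ?thesis using par unfolding B_forests_def by simp
  qed
  ultimately show ?thesis using forest_in_relabel[OF inj forest] unfolding B_forests_def by simp
qed

lemma trees_rooted_relabel:
  "inj_on h S \<Longrightarrow> t \<in> trees_rooted S x \<Longrightarrow> relabel h S t \<in> trees_rooted (h ` S) (h x)"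
  using roots_in_relabel forest_in_relabel unfolding trees_rooted_def by auto

lemma card_A_trees_eq_rank:
  assumes "finite Z"
  shows "card (A_trees l k Z) = card (A_trees l k {1..card Z})"
proof -
  let ?h = "rank Z"
  have mono: "strict_mono_on Z ?h" by (rule strict_mono_on_rank[OF assms])
  have inj: "inj_on ?h Z" using strict_mono_on_imp_inj_on[OF mono] .
  have image: "?h ` Z = {1..card Z}" by (rule rank_image[OF assms])
  have inv_image: "inv_into Z ?h ` ?h ` Z = Z" using inj by simp
  show ?thesis
  proof (rule card_eq_by_relabel[OF inj, unfolded image])
    fix par assume "par \<in> A_trees l k Z"
    then show "forest_in Z par \<and> relabel ?h Z par \<in> A_trees l k {1..card Z}"
      using A_trees_relabel[OF mono] image unfolding A_trees_def by auto
  next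
    fix q assume q: "q \<in> A_trees l k {1..card Z}"
    then have "relabel (inv_into Z ?h) (?h ` Z) q \<in> A_trees l k Z"
      using A_trees_relabel[OF strict_mono_on_inv_into[OF mono]] image inv_image by metis
    then show "forest_in {1..card Z} q \<and> relabel (inv_into Z ?h) {1..card Z} q \<in> A_trees l k Z"
      using q image unfolding A_trees_def by simp
  qed
qed

lemma card_B_forests_eq_rank:
  assumes "finite Z" "Z \<noteq> {}"
  shows "card (B_forests l k Z (Max Z)) = card (B_forests l k {1..card Z} (card Z))"
proof -
  let ?h = "rank Z"
  have mono: "strict_mono_on Z ?h" by (rule strict_mono_on_rank[OF assms(1)])
  have inj: "inj_on ?h Z" using strict_mono_on_imp_inj_on[OF mono] .
  have image: "?h ` Z = {1..card Z}" by (rule rank_image[OF assms(1)])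
  have inv_image: "inv_into Z ?h ` ?h ` Z = Z" using inj by simp
  have max: "Max Z \<in> Z" "?h (Max Z) = card Z" using rank_Max[OF assms] assms by auto
  then have inv_max: "inv_into Z ?h (card Z) = Max Z" using inj by (metis inv_into_f_f)
  have card_image: "card Z \<in> ?h ` Z" using max by (metis imageI)
  show ?thesis
  proof (rule card_eq_by_relabel[OF inj, unfolded image])
    fix par assume "par \<in> B_forests l k Z (Max Z)"
    then show "forest_in Z par \<and> relabel ?h Z par \<in> B_forests l k {1..card Z} (card Z)"
      using B_forests_relabel[OF mono _ max(1)] image max(2) unfolding B_forests_def by auto
  next
    fix q assume q: "q \<in> B_forests l k {1..card Z} (card Z)"
    then have "relabel (inv_into Z ?h) (?h ` Z) q \<in> B_forests l k Z (Max Z)"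
      using B_forests_relabel[OF strict_mono_on_inv_into[OF mono] _ card_image] image inv_image inv_max
      by metis
    then show "forest_in {1..card Z} q \<and> relabel (inv_into Z ?h) {1..card Z} q \<in> B_forests l k Z (Max Z)"
      using q image unfolding B_forests_def by simp
  qed
qed

lemma card_trees_rooted_eq:
  assumes "finite S" "x \<in> S"
  shows "card (trees_rooted S x) = card (trees_rooted {1..card S} (card S))"
proof -
  let ?h = "Transposition.transpose (rank S x) (card S) \<circ> rank S"
  have inj_rank: "inj_on (rank S) S"
    using strict_mono_on_imp_inj_on[OF strict_mono_on_rank[OF assms(1)]] .
  have inj: "inj_on ?h S" using inj_rank by (simp add: comp_inj_on)
  have "rank S x \<in> {1..card S}" using rank_image[OF assms(1)] assms(2) by blast
  then have "Transposition.transpose (rank S x) (card S) ` {1..card S} = {1..card S}"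
    by (intro transpose_image_eq) auto
  moreover have "?h ` S = Transposition.transpose (rank S x) (card S) ` {1..card S}"
    using rank_image[OF assms(1)] by (metis image_comp)
  ultimately have image: "?h ` S = {1..card S}" by simp
  have hx: "?h x = card S" by simp
  have inv_image: "inv_into S ?h ` ?h ` S = S" by (rule inv_into_image_cancel[OF inj subset_refl])
  have inv_x: "inv_into S ?h (card S) = x" using hx inj assms(2) by (metis inv_into_f_f)
  show ?thesis
  proof (rule card_eq_by_relabel[OF inj, unfolded image])
    fix t assume "t \<in> trees_rooted S x"
    then show "forest_in S t \<and> relabel ?h S t \<in> trees_rooted {1..card S} (card S)"
      using trees_rooted_relabel[OF inj] image hx unfolding trees_rooted_def by auto
  next
    fix q assume q: "q \<in> trees_rooted {1..card S} (card S)"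
    then have "relabel (inv_into S ?h) (?h ` S) q \<in> trees_rooted S x"
      using trees_rooted_relabel[OF inj_on_inv_into[OF subset_refl]] image inv_image inv_x by metis
    then show "forest_in {1..card S} q \<and> relabel (inv_into S ?h) {1..card S} q \<in> trees_rooted S x"
      using q image unfolding trees_rooted_def by simp
  qed
qed

lemma card_rooted_trees:
  assumes "finite S"
  shows "card (rooted_trees S) = card S * card (trees_rooted {1..card S} (card S))"
proof -
  have "card (rooted_trees S) = (\<Sum>x \<in> S. card (trees_rooted S x))"
    unfolding rooted_trees_eq_Union
  proof (rule card_UN_disjoint[OF assms])
    show "\<forall>x \<in> S. finite (trees_rooted S x)"
      unfolding trees_rooted_def using finite_forests_in[OF assms] by simp
  qed (auto simp: trees_rooted_def)
  also have "\<dots> = (\<Sum>x \<in> S. card (trees_rooted {1..card S} (card S)))"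
    using card_trees_rooted_eq[OF assms] by simp
  finally show ?thesis by simp
qed


lemma card_eq_by_inverses:
  assumes "\<And>a. a \<in> A \<Longrightarrow> f a \<in> B \<and> g (f a) = a" "\<And>b. b \<in> B \<Longrightarrow> g b \<in> A \<and> f (g b) = b"
  shows "card A = card B"
proof -
  have "bij_betw f A B" by (rule bij_betw_byWitness[where f' = g]) (use assms in auto)
  then show ?thesis by (rule bij_betw_same_card)
qed

lemma card_eq_sum_card_fibres:
  assumes "finite S" "finite W" "\<And>s. s \<in> S \<Longrightarrow> key s \<subseteq> W"
  shows "card S = card {s \<in> S. key s = {}} + (\<Sum>I \<in> Pow W - {{}}. card {s \<in> S. key s = I})"
proof -
  have "card S = (\<Sum>I \<in> Pow W. card {s \<in> S. key s = I})"
  proof -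
    have "key ` S \<subseteq> Pow W" using assms(3) by blast
    then show ?thesis
      using sum.group[OF assms(1) finite_Pow_iff[THEN iffD2, OF assms(2)], of key "\<lambda>_. 1 :: nat"]
      by simp
  qed
  also have "\<dots> = card {s \<in> S. key s = {}} + (\<Sum>I \<in> Pow W - {{}}. card {s \<in> S. key s = I})"
    using assms(2) by (simp add: sum.remove[of "Pow W" "{}"])
  finally show ?thesis .
qed


section \<open>The recurrence for \<open>B\<close>\<close>

lemma forest_in_insert_isolated:
  assumes forest: "forest_in (V - {n}) par" and n: "n \<in> V"
  shows "forest_in V par"
  unfolding forest_in_def
proof (intro conjI allI ballI impI)
  have roots: "n \<in> roots_in V par" "roots_in (V - {n}) par \<subseteq> roots_in V par"
    unfolding roots_in_def using n forest_in_outside[OF forest] by auto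
  show "par v = None" if "v \<notin> V" for v using that forest_in_outside[OF forest] by simp
  show "u \<in> V" if "par v = Some u" for v u using that forest_in_closed(2)[OF forest] by blast
  show "\<exists>r \<in> roots_in V par. (v, r) \<in> (par_edges par)\<^sup>*" if "v \<in> V" for v
  proof (cases "v = n")
    case False
    then show ?thesis using forest_in_reach_root[OF forest] that roots(2) by blast
  qed (use roots(1) in blast)
qed

lemma forest_in_Diff_isolated:
  assumes "n \<in> V"
  shows "forest_in (V - {n}) par \<longleftrightarrow> forest_in V par \<and> par n = None \<and> children par n = {}"
proof
  assume forest: "forest_in (V - {n}) par"
  have "par n = None" using forest_in_outside[OF forest] by simp
  moreover have "children par n = {}"
    unfolding children_def using forest_in_closed(2)[OF forest] by auto
  ultimately show "forest_in V par \<and> par n = None \<and> children par n = {}"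
    using forest_in_insert_isolated[OF forest assms] by blast
next
  assume "forest_in V par \<and> par n = None \<and> children par n = {}"
  then have forest: "forest_in V par" and root: "par n = None" and no_child: "\<And>v. par v \<noteq> Some n"
    unfolding children_def by auto
  show "forest_in (V - {n}) par"
    unfolding forest_in_def
  proof (intro conjI allI ballI impI)
    show "par v = None" if "v \<notin> V - {n}" for v
      using that forest_in_outside[OF forest] root by (cases "v = n") auto
    show "u \<in> V - {n}" if "par v = Some u" for v u
      using that forest_in_closed(2)[OF forest] no_child by blast
    show "\<exists>r \<in> roots_in (V - {n}) par. (v, r) \<in> (par_edges par)\<^sup>*" if v: "v \<in> V - {n}" for v
    proof -
      obtain r where r: "r \<in> roots_in V par" "(v, r) \<in> (par_edges par)\<^sup>*"
        using forest_in_reach_root[OF forest] v by blast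
      have "r \<noteq> n"
      proof
        assume "r = n"
        then obtain w where "par w = Some n" using r(2) v by (auto elim: rtranclE)
        then show False using no_child by blast
      qed
      then show ?thesis using r unfolding roots_in_def by blast
    qed
  qed
qed

lemma B_forests_isolated_eq:
  assumes "finite V" "n \<in> V"
  shows "{par \<in> B_forests l k V n. par n = None} = MD_forests l k (V - {n})"
proof -
  have roots: "roots_in V par - {root_in V par n} = roots_in (V - {n}) par"
    and card_roots: "card (roots_in V par) = card (roots_in (V - {n}) par) + 1"
    if "par n = None" for par
  proof -
    have "roots_in V par = insert n (roots_in (V - {n}) par)" "n \<notin> roots_in (V - {n}) par"
      using that assms(2) unfolding roots_in_def by auto
    moreover have "root_in V par n = n"
      using root_in_eqI[of n V par] that assms(2) unfolding roots_in_def by simp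
    ultimately show "roots_in V par - {root_in V par n} = roots_in (V - {n}) par"
      "card (roots_in V par) = card (roots_in (V - {n}) par) + 1"
      using finite_roots_in[of "V - {n}" par] assms(1) by auto
  qed
  show ?thesis
  proof (intro equalityI subsetI)
    fix par assume "par \<in> {par \<in> B_forests l k V n. par n = None}"
    then show "par \<in> MD_forests l k (V - {n})"
      using forest_in_Diff_isolated[OF assms(2)] roots card_roots
      unfolding B_forests_def MD_forests_def by auto
  next
    fix par assume par: "par \<in> MD_forests l k (V - {n})"
    then have "par n = None" unfolding MD_forests_def using forest_in_outside by blast
    then show "par \<in> {par \<in> B_forests l k V n. par n = None}"
      using par forest_in_Diff_isolated[OF assms(2)] roots card_roots
      unfolding B_forests_def MD_forests_def by auto
  qed
qed


text \<open>When the leaf \<open>n\<close> has parent \<open>x\<close> and \<open>I\<close> is the subtree of \<open>x\<close> without \<open>n\<close>,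
  \<open>excise I n par\<close> deletes \<open>I\<close> and lets \<open>n\<close> take the place of \<open>x\<close>. The inverse operation
  \<open>splice_tree I n x t F\<close> inserts a tree \<open>t\<close> on \<open>I\<close> with root \<open>x\<close> between \<open>n\<close> and its parent.\<close>

definition excise :: "nat set \<Rightarrow> nat \<Rightarrow> (nat \<Rightarrow> nat option) \<Rightarrow> (nat \<Rightarrow> nat option)" where
  "excise I n par = (par |` (- I))(n := par (the (par n)))"

locale B_excision =
  fixes l k :: nat and V :: "nat set" and n x :: nat and par :: "nat \<Rightarrow> nat option"
  assumes B: "par \<in> B_forests l k V n" and parent_n: "par n = Some x"
    and finite_V: "finite V" and n_in_V: "n \<in> V"
begin

abbreviation I :: "nat set" where "I \<equiv> descendants par x - {n}"

lemma forest: "forest_in V par"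
  using B unfolding B_forests_def by blast

lemma no_child_n: "par v \<noteq> Some n"
  using B unfolding B_forests_def children_def by blast

lemma x_in_V: "x \<in> V"
  using forest_in_closed(2)[OF forest parent_n] .

lemma x_ne_n: "x \<noteq> n"
  using no_child_n[of n] parent_n by auto

lemma n_descendant: "n \<in> descendants par x"
  using descendants_child[of par n x x, OF parent_n descendants_self] .

lemma x_in_I: "x \<in> I"
  using x_ne_n by simp

lemma I_subset: "I \<subseteq> V - {n}"
  using descendants_subset[OF forest x_in_V] by blast

lemma subtree_trees_rooted: "par |` (I - {x}) \<in> trees_rooted I x"
proof (rule restrict_trees_rooted[OF x_in_I])
  show "u \<in> I" if "v \<in> I - {x}" "par v = Some u" for v u
    using descendants_parent[of v par x u] no_child_n[of v] that by auto
  show "(v, x) \<in> (par_edges par)\<^sup>*" if "v \<in> I" for v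
    using that unfolding descendants_def by blast
qed

lemma excise_I: "v \<in> I \<Longrightarrow> excise I n par v = None"
  unfolding excise_def by auto

lemma excise_n: "excise I n par n = par x"
  unfolding excise_def using parent_n by simp

lemma excise_other: "v \<notin> I \<Longrightarrow> v \<noteq> n \<Longrightarrow> excise I n par v = par v"
  unfolding excise_def by simp

lemma reach_excise:
  assumes "(v, y) \<in> (par_edges par)\<^sup>*" "v \<notin> descendants par x"
  shows "(v, y) \<in> (par_edges (excise I n par))\<^sup>* \<and> y \<notin> descendants par x"
  using assms
proof (induction rule: converse_rtrancl_induct)
  case (step v w)
  have "par v = Some w" using step(1) by simp
  moreover have "w \<notin> descendants par x" using descendants_child[of par v w x] step(1,4) by auto
  moreover have "v \<noteq> n" using n_descendant step(4) by blast
  ultimately have "(v, w) \<in> par_edges (excise I n par)" using excise_other step(4) by simp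
  then show ?case using step(3) \<open>w \<notin> descendants par x\<close> by (meson converse_rtrancl_into_rtrancl)
qed simp

lemma roots_in_excise_iff:
  "r \<in> roots_in (V - I) (excise I n par) \<longleftrightarrow>
     (r = n \<and> par x = None) \<or> (r \<in> roots_in V par \<and> r \<noteq> x)"
proof (cases "r = n")
  case True
  then show ?thesis using excise_n n_in_V parent_n unfolding roots_in_def by auto
next
  case False
  have "r \<notin> descendants par x" if "r \<in> roots_in V par" "r \<noteq> x"
    using reach_root_in_eq[OF that(1)] that(2) unfolding descendants_def by blast
  then show ?thesis using False excise_other[of r] unfolding roots_in_def by auto
qed

lemma root_in_n: "par x = None \<Longrightarrow> root_in V par n = x"
  by (rule root_in_eqI) (use x_in_V parent_n in \<open>auto simp: roots_in_def\<close>)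

lemma parent_x_outside: "par x = Some u \<Longrightarrow> u \<in> V - descendants par x"
  using parent_not_descendant[OF forest] forest_in_closed(2)[OF forest] by blast

lemma reach_root_excise:
  assumes "v \<in> V" "v \<notin> descendants par x"
  shows "\<exists>r \<in> roots_in (V - I) (excise I n par). (v, r) \<in> (par_edges (excise I n par))\<^sup>*"
proof -
  obtain r where r: "r \<in> roots_in V par" "(v, r) \<in> (par_edges par)\<^sup>*"
    using forest_in_reach_root[OF forest assms(1)] by blast
  then have "(v, r) \<in> (par_edges (excise I n par))\<^sup>*" "r \<notin> descendants par x"
    using reach_excise assms(2) by blast+
  moreover have "r \<noteq> x" using \<open>r \<notin> descendants par x\<close> by auto
  ultimately show ?thesis using roots_in_excise_iff r(1) by blast
qed

lemma forest_excise: "forest_in (V - I) (excise I n par)"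
  unfolding forest_in_def
proof (intro conjI allI ballI impI)
  let ?F = "excise I n par" and ?W = "V - I"
  show "?F v = None" if "v \<notin> ?W" for v
  proof (cases "v \<in> I")
    case False
    then have "v \<notin> V" "v \<noteq> n" using that n_in_V by auto
    then show ?thesis using False excise_other forest_in_outside[OF forest] by simp
  qed (rule excise_I)
  show "u \<in> ?W" if "v \<in> ?W" "?F v = Some u" for v u
  proof (cases "v = n")
    case True
    then show ?thesis using that excise_n parent_x_outside by auto
  next
    case False
    then have "par v = Some u" "v \<notin> descendants par x" using that excise_other by auto
    then show ?thesis using descendants_child[of par v u x] forest_in_closed(2)[OF forest] by blast
  qed
  show "\<exists>r \<in> roots_in ?W ?F. (v, r) \<in> (par_edges ?F)\<^sup>*" if v: "v \<in> ?W" for v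
  proof (cases "v = n")
    case True
    show ?thesis
    proof (cases "par x")
      case None
      then show ?thesis using True roots_in_excise_iff by blast
    next
      case (Some u)
      then obtain r where "r \<in> roots_in ?W ?F" "(u, r) \<in> (par_edges ?F)\<^sup>*"
        using reach_root_excise parent_x_outside by blast
      moreover have "?F n = Some u" using excise_n Some by simp
      ultimately show ?thesis using True by (meson converse_rtrancl_into_rtrancl par_edges_iff)
    qed
  qed (use v reach_root_excise in blast)
qed

lemma other_root_not_above:
  assumes "r \<in> roots_in V par" "r \<noteq> root_in V par n"
  shows "(x, r) \<notin> (par_edges par)\<^sup>*"
proof
  assume "(x, r) \<in> (par_edges par)\<^sup>*"
  then have "(n, r) \<in> (par_edges par)\<^sup>*" using parent_n by (simp add: converse_rtrancl_into_rtrancl)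
  then show False using root_in_eqI[OF assms(1)] assms(2) by blast
qed

lemma other_root_disjoint:
  assumes "r \<in> roots_in V par" "r \<noteq> root_in V par n"
  shows "descendants par r \<inter> descendants par x = {}"
proof -
  have "r \<noteq> x" using other_root_not_above[OF assms] by auto
  have False if "(v, x) \<in> (par_edges par)\<^sup>*" "(v, r) \<in> (par_edges par)\<^sup>*" for v
    using reach_comparable[OF that] other_root_not_above[OF assms] reach_root_in_eq[OF assms(1)] \<open>r \<noteq> x\<close>
    by blast
  then show ?thesis unfolding descendants_def by blast
qed

lemma MD_excise:
  assumes r: "r \<in> roots_in V par" "r \<noteq> root_in V par n"
  shows "MD (excise I n par) r = MD par r"
proof (rule MD_cong[where S = "descendants par r"])
  have "r \<noteq> x" using other_root_not_above[OF r] by auto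
  then show "excise I n par r = None" using roots_in_excise_iff r(1) unfolding roots_in_def by blast
  show "par r = None" using r(1) unfolding roots_in_def by simp
  show "\<forall>v \<in> descendants par r - {r}. par v = excise I n par v"
  proof
    fix v assume "v \<in> descendants par r - {r}"
    then have "v \<notin> descendants par x" using other_root_disjoint[OF r] by blast
    then have "v \<notin> I" "v \<noteq> n" using n_descendant by auto
    then show "par v = excise I n par v" using excise_other by simp
  qed
  show "\<forall>v u. par v = Some u \<longrightarrow> u \<in> descendants par r \<longrightarrow> v < u \<longrightarrow> v \<in> descendants par r"
    using descendants_child by blast
  show "\<forall>v u. excise I n par v = Some u \<longrightarrow> u \<in> descendants par r \<longrightarrow> v < u \<longrightarrow> v \<in> descendants par r"
  proof (intro allI impI)
    fix v u assume v: "excise I n par v = Some u" "u \<in> descendants par r"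
    show "v \<in> descendants par r"
    proof (cases "v = n")
      case True
      then have "x \<in> descendants par r" using v excise_n descendants_child by simp
      then show ?thesis using other_root_not_above[OF r] unfolding descendants_def by blast
    next
      case False
      then have "par v = Some u" using v excise_I excise_other by (cases "v \<in> I") auto
      then show ?thesis using descendants_child v(2) by blast
    qed
  qed
qed simp

lemma root_in_excise_n:
  "root_in (V - I) (excise I n par) n = (case par x of None \<Rightarrow> n | Some _ \<Rightarrow> root_in V par n)"
proof (cases "par x")
  case None
  have "n \<in> roots_in (V - I) (excise I n par)" using roots_in_excise_iff None by blast
  then have "root_in (V - I) (excise I n par) n = n" by (rule root_in_eqI) simp
  then show ?thesis using None by simp
next
  case (Some u)
  let ?\<rho> = "root_in V par n"
  have \<rho>: "?\<rho> \<in> roots_in V par" "(n, ?\<rho>) \<in> (par_edges par)\<^sup>*" using root_in[OF forest n_in_V] by auto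
  have "x \<noteq> ?\<rho>" "n \<noteq> ?\<rho>" using \<rho>(1) Some parent_n unfolding roots_in_def by auto
  have "(x, ?\<rho>) \<in> (par_edges par)\<^sup>*"
    using reach_first_step[OF \<rho>(2) \<open>n \<noteq> ?\<rho>\<close>] parent_n by auto
  then have "(u, ?\<rho>) \<in> (par_edges par)\<^sup>*"
    using reach_first_step[of x ?\<rho> par] \<open>x \<noteq> ?\<rho>\<close> Some by auto
  then have "(u, ?\<rho>) \<in> (par_edges (excise I n par))\<^sup>*"
    using reach_excise parent_x_outside[OF Some] by blast
  moreover have "(n, u) \<in> par_edges (excise I n par)" using excise_n Some by simp
  ultimately have "(n, ?\<rho>) \<in> (par_edges (excise I n par))\<^sup>*"
    by (meson converse_rtrancl_into_rtrancl)
  moreover have "?\<rho> \<in> roots_in (V - I) (excise I n par)"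
    using roots_in_excise_iff \<rho>(1) \<open>x \<noteq> ?\<rho>\<close> by blast
  ultimately have "root_in (V - I) (excise I n par) n = ?\<rho>" by (rule root_in_eqI[rotated])
  then show ?thesis using Some by simp
qed

lemma other_roots_excise:
  "roots_in (V - I) (excise I n par) - {root_in (V - I) (excise I n par) n}
     = roots_in V par - {root_in V par n}"
proof (cases "par x")
  case None
  then have "root_in (V - I) (excise I n par) n = n" "root_in V par n = x"
    using root_in_excise_n root_in_n by auto
  moreover have "n \<notin> roots_in V par" using parent_n unfolding roots_in_def by auto
  ultimately show ?thesis using roots_in_excise_iff None by auto
next
  case (Some u)
  then have "root_in (V - I) (excise I n par) n = root_in V par n" using root_in_excise_n by simp
  moreover have "x \<notin> roots_in V par" using Some unfolding roots_in_def by auto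
  ultimately show ?thesis using roots_in_excise_iff Some by auto
qed

lemma card_roots_excise: "card (roots_in (V - I) (excise I n par)) = l + 1"
proof -
  have card: "card (roots_in V par) = l + 1" using B unfolding B_forests_def by blast
  show ?thesis
  proof (cases "par x")
    case None
    then have "roots_in (V - I) (excise I n par) = insert n (roots_in V par - {x})"
      using roots_in_excise_iff by blast
    moreover have "n \<notin> roots_in V par" "x \<in> roots_in V par"
      using None parent_n x_in_V unfolding roots_in_def by auto
    ultimately show ?thesis using card finite_roots_in[OF finite_V] by (simp add: card_Diff_singleton)
  next
    case (Some u)
    then have "x \<notin> roots_in V par" unfolding roots_in_def by simp
    then have "roots_in (V - I) (excise I n par) = roots_in V par"
      using roots_in_excise_iff Some by auto
    then show ?thesis using card by simp
  qed
qed

lemma excise_in_B_forests: "excise I n par \<in> B_forests l k (V - I) n"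
proof -
  have "excise I n par v \<noteq> Some n" for v
    using excise_I excise_n excise_other no_child_n by (cases "v \<in> I"; cases "v = n") auto
  then have "children (excise I n par) n = {}" unfolding children_def by blast
  moreover have "(\<Sum>r \<in> roots_in (V - I) (excise I n par) - {root_in (V - I) (excise I n par) n}.
      card (MD (excise I n par) r)) = (\<Sum>r \<in> roots_in V par - {root_in V par n}. card (MD par r))"
    unfolding other_roots_excise by (rule sum.cong) (simp_all add: MD_excise)
  then have "(\<Sum>r \<in> roots_in (V - I) (excise I n par) - {root_in (V - I) (excise I n par) n}.
      card (MD (excise I n par) r)) = k"
    using B unfolding B_forests_def by simp
  ultimately show ?thesis
    unfolding B_forests_def using forest_excise card_roots_excise by blast
qed

end


definition splice_tree ::
    "nat set \<Rightarrow> nat \<Rightarrow> nat \<Rightarrow> (nat \<Rightarrow> nat option) \<Rightarrow> (nat \<Rightarrow> nat option) \<Rightarrow> (nat \<Rightarrow> nat option)" where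
  "splice_tree I n x t F = (\<lambda>v. if v \<in> I then (if v = x then F n else t v) else if v = n then Some x else F v)"

locale B_splicing =
  fixes l k :: nat and V I :: "nat set" and n x :: nat and t F :: "nat \<Rightarrow> nat option"
  assumes finite_V: "finite V" and n_in_V: "n \<in> V" and I_subset: "I \<subseteq> V - {n}"
    and tree: "t \<in> trees_rooted I x" and B: "F \<in> B_forests l k (V - I) n"
begin

lemma forest_t: "forest_in I t" and roots_t: "roots_in I t = {x}"
  using tree unfolding trees_rooted_def by auto

lemma x_in_I: "x \<in> I" and t_x: "t x = None"
  using roots_t unfolding roots_in_def by auto

lemma forest_F: "forest_in (V - I) F"
  using B unfolding B_forests_def by blast

lemma no_child_F: "F v \<noteq> Some n"
  using B unfolding B_forests_def children_def by auto

lemma n_notin_I: "n \<in> V - I"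
  using n_in_V I_subset by auto

lemma splice_x: "splice_tree I n x t F x = F n"
  and splice_I: "v \<in> I \<Longrightarrow> v \<noteq> x \<Longrightarrow> splice_tree I n x t F v = t v"
  and splice_n: "splice_tree I n x t F n = Some x"
  and splice_other: "v \<notin> I \<Longrightarrow> v \<noteq> n \<Longrightarrow> splice_tree I n x t F v = F v"
  unfolding splice_tree_def using x_in_I n_notin_I by auto

lemma reach_splice_F:
  "(w, y) \<in> (par_edges F)\<^sup>* \<Longrightarrow> w \<in> V - I \<Longrightarrow> (w, y) \<in> (par_edges (splice_tree I n x t F))\<^sup>*"
proof (induction rule: converse_rtrancl_induct)
  case (step w w')
  have Fw: "F w = Some w'" using step(1) by simp
  have IH: "(w', y) \<in> (par_edges (splice_tree I n x t F))\<^sup>*"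
    using step(3) forest_in_closed(2)[OF forest_F Fw] by blast
  show ?case
  proof (cases "w = n")
    case True
    then have "(w, x) \<in> par_edges (splice_tree I n x t F)" "(x, w') \<in> par_edges (splice_tree I n x t F)"
      using splice_n splice_x Fw by simp_all
    then show ?thesis using IH by (meson converse_rtrancl_into_rtrancl)
  next
    case False
    then have "(w, w') \<in> par_edges (splice_tree I n x t F)" using splice_other step(4) Fw by simp
    then show ?thesis using IH by (meson converse_rtrancl_into_rtrancl)
  qed
qed simp

lemma reach_splice_t:
  assumes "v \<in> I"
  shows "(v, x) \<in> (par_edges (splice_tree I n x t F))\<^sup>*"
proof -
  have "(v, x) \<in> (par_edges t)\<^sup>*" using forest_in_reach_root[OF forest_t assms] roots_t by simp
  then show ?thesis using assms
  proof (induction rule: converse_rtrancl_induct)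
    case (step v w)
    have tv: "t v = Some w" using step(1) by simp
    then have "v \<noteq> x" using t_x by auto
    then have "(v, w) \<in> par_edges (splice_tree I n x t F)" using splice_I step(4) tv by simp
    then show ?case using step(3) forest_in_closed(2)[OF forest_t tv]
      by (meson converse_rtrancl_into_rtrancl)
  qed simp
qed

lemma roots_in_splice_iff:
  "r \<in> roots_in V (splice_tree I n x t F) \<longleftrightarrow>
     (r = x \<and> F n = None) \<or> (r \<in> roots_in (V - I) F \<and> r \<noteq> n)"
proof (cases "r \<in> I")
  case True
  show ?thesis
  proof (cases "r = x")
    case True
    then show ?thesis using splice_x x_in_I I_subset unfolding roots_in_def by auto
  next
    case False
    then have "t r \<noteq> None" using \<open>r \<in> I\<close> roots_t unfolding roots_in_def by auto
    then show ?thesis using False \<open>r \<in> I\<close> splice_I I_subset unfolding roots_in_def by auto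
  qed
next
  case False
  then show ?thesis using splice_n splice_other x_in_I unfolding roots_in_def by (cases "r = n") auto
qed

lemma reach_root_splice:
  assumes "w \<in> V - I"
  shows "\<exists>r \<in> roots_in V (splice_tree I n x t F). (w, r) \<in> (par_edges (splice_tree I n x t F))\<^sup>*"
proof -
  let ?G = "splice_tree I n x t F"
  obtain r where r: "r \<in> roots_in (V - I) F" "(w, r) \<in> (par_edges F)\<^sup>*"
    using forest_in_reach_root[OF forest_F assms] by blast
  have wr: "(w, r) \<in> (par_edges ?G)\<^sup>*" using reach_splice_F[OF r(2) assms] .
  show ?thesis
  proof (cases "r = n")
    case True
    then have "x \<in> roots_in V ?G" using roots_in_splice_iff r(1) unfolding roots_in_def by auto
    moreover have "(w, x) \<in> (par_edges ?G)\<^sup>*" using wr True splice_n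
      by (meson par_edges_iff rtrancl.rtrancl_into_rtrancl)
    ultimately show ?thesis by blast
  qed (use r wr roots_in_splice_iff in blast)
qed

lemma forest_splice: "forest_in V (splice_tree I n x t F)"
  unfolding forest_in_def
proof (intro conjI allI ballI impI)
  let ?G = "splice_tree I n x t F"
  show "?G v = None" if "v \<notin> V" for v
  proof -
    have "v \<notin> I" "v \<noteq> n" "v \<notin> V - I" using that I_subset n_in_V by auto
    then show ?thesis using splice_other forest_in_outside[OF forest_F] by simp
  qed
  show "u \<in> V" if "v \<in> V" "?G v = Some u" for v u
  proof (cases "v \<in> I")
    case True
    show ?thesis
    proof (cases "v = x")
      case False
      then have "t v = Some u" using that True splice_I by simp
      then show ?thesis using forest_in_closed(2)[OF forest_t] I_subset by blast
    qed (use that splice_x forest_in_closed(2)[OF forest_F] in auto)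
  next
    case False
    then show ?thesis
      using that splice_n splice_other forest_in_closed(2)[OF forest_F] x_in_I I_subset
      by (cases "v = n") auto
  qed
  show "\<exists>r \<in> roots_in V ?G. (v, r) \<in> (par_edges ?G)\<^sup>*" if v: "v \<in> V" for v
  proof (cases "v \<in> I")
    case True
    obtain r where r: "r \<in> roots_in V ?G" "(n, r) \<in> (par_edges ?G)\<^sup>*"
      using reach_root_splice n_notin_I by blast
    have "n \<noteq> r" using r(1) splice_n unfolding roots_in_def by auto
    then have "(x, r) \<in> (par_edges ?G)\<^sup>*" using reach_first_step[OF r(2)] splice_n by auto
    then show ?thesis using reach_splice_t[OF True] r(1) by (meson rtrancl_trans)
  qed (use v reach_root_splice in blast)
qed

lemma children_splice_n: "children (splice_tree I n x t F) n = {}"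
proof -
  have "splice_tree I n x t F v \<noteq> Some n" for v
  proof (cases "v \<in> I")
    case True
    have "t v \<noteq> Some n" using forest_in_closed(2)[OF forest_t, of v n] I_subset by auto
    then show ?thesis using True splice_x splice_I no_child_F by (cases "v = x") auto
  next
    case False
    then show ?thesis using splice_n splice_other no_child_F x_in_I I_subset by (cases "v = n") auto
  qed
  then show ?thesis unfolding children_def by blast
qed

lemma card_roots_splice: "card (roots_in V (splice_tree I n x t F)) = l + 1"
proof -
  have card: "card (roots_in (V - I) F) = l + 1" using B unfolding B_forests_def by blast
  have "x \<notin> roots_in (V - I) F" using x_in_I unfolding roots_in_def by auto
  show ?thesis
  proof (cases "F n")
    case None
    then have "roots_in V (splice_tree I n x t F) = insert x (roots_in (V - I) F - {n})"
      using roots_in_splice_iff by auto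
    moreover have "n \<in> roots_in (V - I) F" using None n_notin_I unfolding roots_in_def by auto
    ultimately show ?thesis
      using card \<open>x \<notin> roots_in (V - I) F\<close> finite_roots_in[of "V - I" F] finite_V
      by (simp add: card_Diff_singleton)
  next
    case (Some u)
    then have "n \<notin> roots_in (V - I) F" unfolding roots_in_def by auto
    then have "roots_in V (splice_tree I n x t F) = roots_in (V - I) F"
      using roots_in_splice_iff Some by auto
    then show ?thesis using card by simp
  qed
qed

lemma other_roots_splice:
  "roots_in V (splice_tree I n x t F) - {root_in V (splice_tree I n x t F) n}
     = roots_in (V - I) F - {root_in (V - I) F n}"
proof (cases "F n")
  case None
  then have "n \<in> roots_in (V - I) F" using n_notin_I unfolding roots_in_def by auto
  then have "root_in (V - I) F n = n" by (rule root_in_eqI) simp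
  moreover have "root_in V (splice_tree I n x t F) n = x"
    by (rule root_in_eqI) (use roots_in_splice_iff None splice_n in auto)
  moreover have "x \<notin> roots_in (V - I) F" using x_in_I unfolding roots_in_def by auto
  ultimately show ?thesis using roots_in_splice_iff None by auto
next
  case (Some u)
  let ?\<rho> = "root_in (V - I) F n"
  have \<rho>: "?\<rho> \<in> roots_in (V - I) F" "(n, ?\<rho>) \<in> (par_edges F)\<^sup>*"
    using root_in[OF forest_F n_notin_I] by auto
  have "?\<rho> \<noteq> n" using \<rho>(1) Some unfolding roots_in_def by auto
  then have "?\<rho> \<in> roots_in V (splice_tree I n x t F)" using roots_in_splice_iff \<rho>(1) by blast
  then have "root_in V (splice_tree I n x t F) n = ?\<rho>"
    using root_in_eqI reach_splice_F[OF \<rho>(2) n_notin_I] by blast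
  moreover have "n \<notin> roots_in (V - I) F" using Some unfolding roots_in_def by auto
  ultimately show ?thesis using roots_in_splice_iff Some by auto
qed

lemma below_other_root:
  assumes "r \<in> roots_in (V - I) F" "r \<noteq> root_in (V - I) F n" "u \<in> descendants F r"
  shows "u \<in> V - I" "u \<noteq> n"
proof -
  show "u \<noteq> n"
    using assms root_in_eqI[OF assms(1)] unfolding descendants_def by blast
  show "u \<in> V - I"
  proof (cases "u = r")
    case False
    then obtain w where "F u = Some w"
      using reach_first_step[of u r F] assms(3) unfolding descendants_def by blast
    then show ?thesis using forest_in_closed(1)[OF forest_F] by blast
  qed (use assms(1) in \<open>simp add: roots_in_def\<close>)
qed

lemma descendants_other_root_splice:
  assumes r: "r \<in> roots_in (V - I) F" "r \<noteq> root_in (V - I) F n"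
    and v: "splice_tree I n x t F v = Some u" "u \<in> descendants F r"
  shows "v \<in> descendants F r"
proof -
  have u: "u \<in> V - I" "u \<noteq> n" using below_other_root[OF r v(2)] by auto
  consider "v = x" | "v \<in> I" "v \<noteq> x" | "v = n" | "v \<notin> I" "v \<noteq> n" by blast
  then show ?thesis
  proof cases
    case 1
    then have "n \<in> descendants F r" using v splice_x descendants_child by simp
    then show ?thesis using below_other_root(2)[OF r] by blast
  next
    case 2
    then have "t v = Some u" using v(1) splice_I by simp
    then show ?thesis using forest_in_closed(2)[OF forest_t] u(1) by blast
  next
    case 3
    then show ?thesis using v(1) splice_n u(1) x_in_I by auto
  next
    case 4
    then have "F v = Some u" using v(1) splice_other by simp
    then show ?thesis using descendants_child v(2) by blast
  qed
qed

lemma MD_splice: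
  assumes r: "r \<in> roots_in (V - I) F" "r \<noteq> root_in (V - I) F n"
  shows "MD (splice_tree I n x t F) r = MD F r"
proof (rule MD_cong[where S = "descendants F r"])
  let ?G = "splice_tree I n x t F"
  have "r \<noteq> n" using below_other_root(2)[OF r descendants_self] .
  then show "?G r = None" using roots_in_splice_iff r(1) unfolding roots_in_def by blast
  show "F r = None" using r(1) unfolding roots_in_def by simp
  show "\<forall>v \<in> descendants F r - {r}. F v = ?G v"
    using below_other_root[OF r] splice_other by auto
  show "\<forall>v u. F v = Some u \<longrightarrow> u \<in> descendants F r \<longrightarrow> v < u \<longrightarrow> v \<in> descendants F r"
    using descendants_child by blast
  show "\<forall>v u. ?G v = Some u \<longrightarrow> u \<in> descendants F r \<longrightarrow> v < u \<longrightarrow> v \<in> descendants F r"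
    using descendants_other_root_splice[OF r] by blast
qed simp

lemma splice_in_B_forests: "splice_tree I n x t F \<in> B_forests l k V n"
proof -
  let ?G = "splice_tree I n x t F"
  have "(\<Sum>r \<in> roots_in V ?G - {root_in V ?G n}. card (MD ?G r))
      = (\<Sum>r \<in> roots_in (V - I) F - {root_in (V - I) F n}. card (MD F r))"
    unfolding other_roots_splice by (rule sum.cong) (simp_all add: MD_splice)
  then have "(\<Sum>r \<in> roots_in V ?G - {root_in V ?G n}. card (MD ?G r)) = k"
    using B unfolding B_forests_def by simp
  then show ?thesis
    unfolding B_forests_def using forest_splice card_roots_splice children_splice_n by blast
qed

lemma descendants_splice: "descendants (splice_tree I n x t F) x - {n} = I"
proof
  show "I \<subseteq> descendants (splice_tree I n x t F) x - {n}"
    using reach_splice_t I_subset unfolding descendants_def by auto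
  have "y \<notin> I \<and> y \<noteq> n" if "(v, y) \<in> (par_edges (splice_tree I n x t F))\<^sup>*" "v \<notin> I" "v \<noteq> n" for v y
    using that
  proof (induction rule: rtrancl_induct)
    case (step y z)
    then have "F y = Some z" using splice_other by simp
    then show ?case using forest_in_closed(2)[OF forest_F] no_child_F by blast
  qed simp
  then show "descendants (splice_tree I n x t F) x - {n} \<subseteq> I"
    using x_in_I unfolding descendants_def by blast
qed

end


lemma (in B_excision) splice_tree_excise:
  "splice_tree I n x (par |` (I - {x})) (excise I n par) = par"
proof
  fix v
  show "splice_tree I n x (par |` (I - {x})) (excise I n par) v = par v"
    using excise_n excise_other parent_n unfolding splice_tree_def by auto
qed

lemma (in B_splicing) restrict_splice_tree: "splice_tree I n x t F |` (I - {x}) = t"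
proof
  fix v
  show "(splice_tree I n x t F |` (I - {x})) v = t v"
    using splice_I t_x forest_in_outside[OF forest_t, of v] by (auto simp: restrict_map_def)
qed

lemma (in B_splicing) excise_splice_tree: "excise I n (splice_tree I n x t F) = F"
proof
  fix v
  show "excise I n (splice_tree I n x t F) v = F v"
  proof (cases "v \<in> I")
    case True
    then show ?thesis using forest_in_outside[OF forest_F, of v] n_notin_I unfolding excise_def by auto
  next
    case False
    then show ?thesis using splice_n splice_x splice_other unfolding excise_def by simp
  qed
qed

definition B_key :: "nat \<Rightarrow> (nat \<Rightarrow> nat option) \<Rightarrow> nat set" where
  "B_key n par = (case par n of None \<Rightarrow> {} | Some x \<Rightarrow> descendants par x - {n})"

lemma finite_B_forests: "finite V \<Longrightarrow> finite (B_forests l k V n)"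
  unfolding B_forests_def using finite_forests_in by simp

lemma card_B_fibre:
  assumes finite: "finite V" and n: "n \<in> V" and I: "I \<subseteq> V - {n}" "I \<noteq> {}"
  shows "card {par \<in> B_forests l k V n. B_key n par = I}
    = card (rooted_trees I) * card (B_forests l k (V - I) n)"
proof -
  let ?f = "\<lambda>par. (par |` (I - {the (par n)}), excise I n par)"
  let ?g = "\<lambda>(t, F). splice_tree I n (the_elem (roots_in I t)) t F"
  have "card {par \<in> B_forests l k V n. B_key n par = I} = card (rooted_trees I \<times> B_forests l k (V - I) n)"
  proof (rule card_eq_by_inverses[where f = ?f and g = ?g])
    fix par assume par: "par \<in> {par \<in> B_forests l k V n. B_key n par = I}"
    then obtain x where x: "par n = Some x" using I(2) unfolding B_key_def by (cases "par n") auto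
    then have I_eq: "I = descendants par x - {n}" using par unfolding B_key_def by simp
    interpret B_excision l k V n x par using par x finite n by unfold_locales auto
    have "the_elem (roots_in I (par |` (I - {x}))) = x"
      using subtree_trees_rooted unfolding I_eq trees_rooted_def by simp
    then show "?f par \<in> rooted_trees I \<times> B_forests l k (V - I) n \<and> ?g (?f par) = par"
      using subtree_trees_rooted excise_in_B_forests splice_tree_excise x_in_I x
      unfolding I_eq rooted_trees_eq_Union by auto
  next
    fix a assume "a \<in> rooted_trees I \<times> B_forests l k (V - I) n"
    then obtain t F x where a: "a = (t, F)" "t \<in> trees_rooted I x" "F \<in> B_forests l k (V - I) n"
      unfolding rooted_trees_eq_Union by auto
    interpret B_splicing l k V I n x t F using a finite n I(1) by unfold_locales
    have "the_elem (roots_in I t) = x" using roots_t by simp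
    then show "?g a \<in> {par \<in> B_forests l k V n. B_key n par = I} \<and> ?f (?g a) = a"
      using splice_in_B_forests splice_n descendants_splice restrict_splice_tree excise_splice_tree a(1)
      unfolding B_key_def by simp
  qed
  then show ?thesis by (simp add: card_cartesian_product)
qed

lemma card_B_forests_recurrence:
  assumes finite: "finite V" and n: "n \<in> V"
  shows "card (B_forests l k V n) = card (MD_forests l k (V - {n})) +
     (\<Sum>I \<in> Pow (V - {n}) - {{}}. card (rooted_trees I) * card (B_forests l k (V - I) n))"
proof -
  have key: "B_key n par \<subseteq> V - {n} \<and> (B_key n par = {} \<longleftrightarrow> par n = None)"
    if "par \<in> B_forests l k V n" for par
  proof (cases "par n")
    case (Some x)
    then interpret B_excision l k V n x par using that finite n by unfold_locales
    have "B_key n par = I" using Some unfolding B_key_def by simp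
    moreover have "I \<noteq> {}" using x_in_I by blast
    ultimately show ?thesis using I_subset Some by auto
  qed (simp add: B_key_def)
  have "card (B_forests l k V n) = card {par \<in> B_forests l k V n. B_key n par = {}}
      + (\<Sum>I \<in> Pow (V - {n}) - {{}}. card {par \<in> B_forests l k V n. B_key n par = I})"
    using finite_B_forests[OF finite] finite key by (intro card_eq_sum_card_fibres) auto
  also have "{par \<in> B_forests l k V n. B_key n par = {}} = MD_forests l k (V - {n})"
    using key B_forests_isolated_eq[OF finite n] by blast
  also have "(\<Sum>I \<in> Pow (V - {n}) - {{}}. card {par \<in> B_forests l k V n. B_key n par = I})
      = (\<Sum>I \<in> Pow (V - {n}) - {{}}. card (rooted_trees I) * card (B_forests l k (V - I) n))"
    using card_B_fibre[OF finite n] by (intro sum.cong) auto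
  finally show ?thesis .
qed


section \<open>The recurrence for \<open>A\<close>\<close>

definition remove_root :: "nat \<Rightarrow> (nat \<Rightarrow> nat option) \<Rightarrow> (nat \<Rightarrow> nat option)" where
  "remove_root n par = (\<lambda>v. if par v = Some n then None else par v)"

definition add_root :: "nat set \<Rightarrow> nat \<Rightarrow> (nat \<Rightarrow> nat option) \<Rightarrow> (nat \<Rightarrow> nat option)" where
  "add_root W n G = (\<lambda>v. if v \<in> roots_in W G then Some n else G v)"

lemma dec_descendants_siblings_disjoint:
  assumes "par n = None" "par c1 = Some n" "par c2 = Some n" "c1 \<noteq> c2"
  shows "dec_descendants par c1 \<inter> dec_descendants par c2 = {}"
proof -
  have False if "(c, c') \<in> (par_edges par)\<^sup>*" "c \<noteq> c'" "par c = Some n" "par c' = Some n" for c c'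
  proof -
    have "(n, c') \<in> (par_edges par)\<^sup>*" using reach_first_step[OF that(1,2)] that(3) by auto
    then have "c' = n" by (rule reach_from_parentless[of par, OF assms(1)])
    then show False using that(4) assms(1) by simp
  qed
  then show ?thesis
    using reach_comparable dec_reach_imp_reach assms(2-4) unfolding dec_descendants_def by blast
qed

locale A_root =
  fixes V :: "nat set" and n :: nat and par :: "nat \<Rightarrow> nat option"
  assumes forest: "forest_in V par" and roots: "roots_in V par = {n}" and finite_V: "finite V"
    and n_max: "\<forall>v \<in> V. v \<le> n"
begin

lemma root_n: "par n = None" and n_in_V: "n \<in> V"
  using roots unfolding roots_in_def by auto

lemma children_n: "c \<in> children par n \<Longrightarrow> c \<in> V - {n} \<and> c < n"
proof -
  assume "c \<in> children par n"
  then have "par c = Some n" unfolding children_def by simp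
  then have "c \<in> V" "c \<noteq> n" using forest_in_closed(1)[OF forest] root_n by auto
  then show ?thesis using n_max by force
qed

lemma roots_remove_root: "roots_in (V - {n}) (remove_root n par) = children par n"
proof (intro equalityI subsetI)
  fix r assume r: "r \<in> roots_in (V - {n}) (remove_root n par)"
  show "r \<in> children par n"
  proof (cases "par r")
    case None
    then have "r \<in> roots_in V par" using r unfolding roots_in_def by simp
    then show ?thesis using roots r unfolding roots_in_def by simp
  next
    case (Some u)
    then show ?thesis using r unfolding roots_in_def remove_root_def children_def by (auto split: if_splits)
  qed
qed (use children_n in \<open>auto simp: roots_in_def remove_root_def children_def\<close>)

lemma forest_remove_root: "forest_in (V - {n}) (remove_root n par)"
  unfolding forest_in_def
proof (intro conjI ballI allI impI)
  let ?G = "remove_root n par"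
  show "?G v = None" if "v \<notin> V - {n}" for v
    using that root_n forest_in_outside[OF forest] unfolding remove_root_def by auto
  show "u \<in> V - {n}" if "v \<in> V - {n}" "?G v = Some u" for v u
    using that forest_in_closed(2)[OF forest] unfolding remove_root_def by (auto split: if_splits)
  fix v assume v: "v \<in> V - {n}"
  have "(v, n) \<in> (par_edges par)\<^sup>*" using forest_in_reach_root[OF forest] v roots by auto
  then show "\<exists>r \<in> roots_in (V - {n}) ?G. (v, r) \<in> (par_edges ?G)\<^sup>*"
    using v
  proof (induction rule: converse_rtrancl_induct)
    case (step v w)
    have pv: "par v = Some w" using step(1) by simp
    show ?case
    proof (cases "w = n")
      case True
      then have "v \<in> roots_in (V - {n}) ?G"
        using roots_remove_root pv step(4) unfolding children_def by simp
      then show ?thesis by blast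
    next
      case False
      then have "w \<in> V - {n}" using forest_in_closed(2)[OF forest pv] by blast
      then obtain r where "r \<in> roots_in (V - {n}) ?G" "(w, r) \<in> (par_edges ?G)\<^sup>*"
        using step(3) by blast
      moreover have "?G v = Some w" using pv False unfolding remove_root_def by simp
      ultimately show ?thesis by (meson converse_rtrancl_into_rtrancl par_edges_iff)
    qed
  qed simp
qed

lemma dec_descendants_remove_root:
  assumes c: "c \<in> children par n"
  shows "dec_descendants (remove_root n par) c = dec_descendants par c"
proof (rule dec_descendants_cong[where S = "descendants par c"])
  have pc: "par c = Some n" using c unfolding children_def by simp
  show "\<forall>v \<in> descendants par c - {c}. par v = remove_root n par v"
  proof
    fix v assume v: "v \<in> descendants par c - {c}"
    have "par v \<noteq> Some n"
    proof
      assume "par v = Some n"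
      moreover obtain u where "par v = Some u" "(u, c) \<in> (par_edges par)\<^sup>*"
        using reach_first_step[of v c par] v unfolding descendants_def by blast
      ultimately have "(n, c) \<in> (par_edges par)\<^sup>*" by simp
      then have "c = n" by (rule reach_from_parentless[of par, OF root_n])
      then show False using pc root_n by simp
    qed
    then show "par v = remove_root n par v" unfolding remove_root_def by simp
  qed
  show "\<forall>v u. remove_root n par v = Some u \<longrightarrow> u \<in> descendants par c \<longrightarrow> v < u \<longrightarrow> v \<in> descendants par c"
    unfolding remove_root_def using descendants_child by (metis option.distinct(1))
  show "\<forall>v u. par v = Some u \<longrightarrow> u \<in> descendants par c \<longrightarrow> v < u \<longrightarrow> v \<in> descendants par c"
    using descendants_child by blast
qed simp

lemma card_MD_remove_root:
  "card (MD par n) = 1 + (\<Sum>c \<in> children par n. card (MD (remove_root n par) c))"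
proof -
  have "{c. par c = Some n \<and> c < n} = children par n" using children_n unfolding children_def by auto
  then have unfold: "dec_descendants par n = insert n (\<Union>c \<in> children par n. dec_descendants par c)"
    using dec_descendants_unfold[of par n] by simp
  have "children par n \<subseteq> V" using children_n by blast
  then have finite_children: "finite (children par n)" using finite_V by (rule finite_subset)
  have finite_dec: "\<forall>c \<in> children par n. finite (dec_descendants par c)"
  proof
    fix c assume "c \<in> children par n"
    then have "dec_descendants par c \<subseteq> V" using dec_descendants_subset[OF forest] children_n by blast
    then show "finite (dec_descendants par c)" using finite_V by (rule finite_subset)
  qed
  have n_notin: "n \<notin> (\<Union>c \<in> children par n. dec_descendants par c)"
  proof
    assume "n \<in> (\<Union>c \<in> children par n. dec_descendants par c)"
    then obtain c where "c \<in> children par n" "(n, c) \<in> (dec_edges par)\<^sup>*"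
      unfolding dec_descendants_def by blast
    then show False
      using reach_from_parentless[of par, OF root_n] dec_reach_imp_reach children_n by blast
  qed
  have disjoint: "\<forall>c1 \<in> children par n. \<forall>c2 \<in> children par n. c1 \<noteq> c2 \<longrightarrow>
      dec_descendants par c1 \<inter> dec_descendants par c2 = {}"
    using dec_descendants_siblings_disjoint[of par, OF root_n] unfolding children_def by blast
  have MD_child: "card (dec_descendants par c) = card (MD (remove_root n par) c)"
    if "c \<in> children par n" for c
  proof -
    have "remove_root n par c = None" using that roots_remove_root unfolding roots_in_def by auto
    then show ?thesis
      using MD_eq_dec_descendants[of "remove_root n par"] dec_descendants_remove_root[OF that] by simp
  qed
  have "card (MD par n) = 1 + card (\<Union>c \<in> children par n. dec_descendants par c)"
    using MD_eq_dec_descendants[of par, OF root_n] unfold n_notin finite_children finite_dec by simp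
  also have "\<dots> = 1 + (\<Sum>c \<in> children par n. card (dec_descendants par c))"
    using card_UN_disjoint[OF finite_children finite_dec disjoint] by simp
  also have "\<dots> = 1 + (\<Sum>c \<in> children par n. card (MD (remove_root n par) c))"
    using MD_child by simp
  finally show ?thesis .
qed

lemma add_root_remove_root: "add_root (V - {n}) n (remove_root n par) = par"
  using roots_remove_root unfolding add_root_def remove_root_def children_def by auto

end

locale A_root_adding =
  fixes V :: "nat set" and n :: nat and G :: "nat \<Rightarrow> nat option"
  assumes forest: "forest_in (V - {n}) G" and n_in_V: "n \<in> V"
begin

lemma add_root_roots: "v \<in> roots_in (V - {n}) G \<Longrightarrow> add_root (V - {n}) n G v = Some n"
  and add_root_other: "v \<notin> roots_in (V - {n}) G \<Longrightarrow> add_root (V - {n}) n G v = G v"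
  unfolding add_root_def by auto

lemma no_parent_n: "G v \<noteq> Some n"
  using forest_in_closed(2)[OF forest, of v n] by auto

lemma remove_root_add_root: "remove_root n (add_root (V - {n}) n G) = G"
  using no_parent_n unfolding remove_root_def add_root_def roots_in_def by auto

lemma children_add_root: "children (add_root (V - {n}) n G) n = roots_in (V - {n}) G"
  using no_parent_n unfolding children_def add_root_def by auto

lemma roots_add_root: "roots_in V (add_root (V - {n}) n G) = {n}"
proof (intro equalityI subsetI)
  fix r assume r: "r \<in> roots_in V (add_root (V - {n}) n G)"
  then have "r \<notin> roots_in (V - {n}) G" using add_root_roots unfolding roots_in_def by fastforce
  moreover have "G r = None" using r add_root_other calculation unfolding roots_in_def by simp
  ultimately show "r \<in> {n}" using r unfolding roots_in_def by auto
next
  have "n \<notin> roots_in (V - {n}) G" unfolding roots_in_def by simp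
  then show "v \<in> roots_in V (add_root (V - {n}) n G)" if "v \<in> {n}" for v
    using that add_root_other forest_in_outside[OF forest, of n] n_in_V unfolding roots_in_def by simp
qed

lemma forest_add_root: "forest_in V (add_root (V - {n}) n G)"
  unfolding forest_in_def
proof (intro conjI ballI allI impI)
  let ?P = "add_root (V - {n}) n G"
  show "?P v = None" if "v \<notin> V" for v
    using that add_root_other forest_in_outside[OF forest, of v] unfolding roots_in_def by simp
  show "u \<in> V" if "v \<in> V" "?P v = Some u" for v u
    using that forest_in_closed(2)[OF forest, of v u] n_in_V unfolding add_root_def by (auto split: if_splits)
  show "\<exists>r \<in> roots_in V ?P. (v, r) \<in> (par_edges ?P)\<^sup>*" if v: "v \<in> V" for v
  proof (cases "v = n")
    case False
    then obtain r where r: "r \<in> roots_in (V - {n}) G" "(v, r) \<in> (par_edges G)\<^sup>*"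
      using forest_in_reach_root[OF forest] v by blast
    have "(v, r) \<in> (par_edges ?P)\<^sup>*" using r(2)
    proof (induction rule: converse_rtrancl_induct)
      case (step v w)
      then have "v \<notin> roots_in (V - {n}) G" unfolding roots_in_def by auto
      then have "?P v = Some w" using add_root_other step(1) by simp
      then show ?case using step(3) by (meson converse_rtrancl_into_rtrancl par_edges_iff)
    qed simp
    moreover have "(r, n) \<in> par_edges ?P" using add_root_roots[OF r(1)] by simp
    ultimately have "(v, n) \<in> (par_edges ?P)\<^sup>*" by (rule rtrancl.rtrancl_into_rtrancl)
    then show ?thesis using roots_add_root by auto
  qed (use roots_add_root in auto)
qed

end

lemma A_trees_root_eq:
  assumes finite: "finite V" and n: "n \<in> V" and n_max: "\<forall>v \<in> V. v \<le> n"
  shows "card {par \<in> A_trees l k V. par n = None} = card (MD_forests l k (V - {n}))"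
proof (rule card_eq_by_inverses[where f = "remove_root n" and g = "add_root (V - {n}) n"])
  fix par assume par: "par \<in> {par \<in> A_trees l k V. par n = None}"
  interpret A_root V n par
  proof
    have "card (roots_in V par) = 1" "n \<in> roots_in V par" using par n unfolding A_trees_def roots_in_def by auto
    then show "roots_in V par = {n}" by (metis card_1_singletonE singletonD)
  qed (use par finite n_max in \<open>auto simp: A_trees_def\<close>)
  have "{c \<in> children par n. c < n} = children par n" using children_n by blast
  then show "remove_root n par \<in> MD_forests l k (V - {n}) \<and> add_root (V - {n}) n (remove_root n par) = par"
    using par forest_remove_root roots_remove_root card_MD_remove_root roots add_root_remove_root
    unfolding MD_forests_def A_trees_def by simp
next
  fix G assume G: "G \<in> MD_forests l k (V - {n})"
  interpret A_root_adding V n G using G n unfolding MD_forests_def by unfold_locales auto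
  interpret A_root V n "add_root (V - {n}) n G"
    using forest_add_root roots_add_root finite n_max by unfold_locales auto
  have "{c \<in> children (add_root (V - {n}) n G) n. c < n} = children (add_root (V - {n}) n G) n"
    using children_n by blast
  then show "add_root (V - {n}) n G \<in> {par \<in> A_trees l k V. par n = None} \<and>
      remove_root n (add_root (V - {n}) n G) = G"
    using G forest_add_root roots_add_root children_add_root card_MD_remove_root remove_root_add_root root_n
    unfolding MD_forests_def A_trees_def by simp
qed


locale A_split =
  fixes l k :: nat and V Z :: "nat set" and n p r :: nat and par :: "nat \<Rightarrow> nat option"
  assumes A: "par \<in> A_trees l k V" and parent_n: "par n = Some p"
    and descendants_n: "descendants par n = V - Z" and Z_subset: "Z \<subseteq> V"
    and n_in_V: "n \<in> V" and n_max: "\<forall>v \<in> V. v \<le> n" and roots: "roots_in V par = {r}"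
begin

lemma forest: "forest_in V par"
  using A unfolding A_trees_def by blast

lemma r_in_V: "r \<in> V" and root_r: "par r = None"
  using roots unfolding roots_in_def by auto

lemma r_in_Z: "r \<in> Z"
proof -
  have "r \<noteq> n" using parent_n root_r by auto
  then have "r \<notin> descendants par n"
    using reach_from_parentless[of par, OF root_r] unfolding descendants_def by blast
  then show ?thesis using descendants_n r_in_V by blast
qed

lemma Z_closed:
  assumes "v \<in> Z" "par v = Some u"
  shows "u \<in> Z"
proof -
  have "u \<notin> descendants par n" using descendants_child[of par v u n] assms descendants_n by blast
  then show ?thesis using forest_in_closed(2)[OF forest assms(2)] descendants_n by blast
qed

lemma restrict_Z: "par |` Z = par |` (Z - {r})"
  using root_r by (auto simp: restrict_map_def)

lemma restrict_trees_rooted_Z: "par |` Z \<in> trees_rooted Z r"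
  unfolding restrict_Z
proof (rule restrict_trees_rooted[OF r_in_Z])
  show "u \<in> Z" if "v \<in> Z - {r}" "par v = Some u" for v u using that Z_closed by blast
  show "(v, r) \<in> (par_edges par)\<^sup>*" if "v \<in> Z" for v
  proof -
    have "v \<in> V" using that Z_subset by blast
    then show ?thesis using forest_in_reach_root[OF forest] roots by auto
  qed
qed

lemma low_children_restrict: "{c \<in> children (par |` Z) r. c < r} = {c \<in> children par r. c < r}"
proof -
  have "c \<in> Z" if "par c = Some r" "c < r" for c
  proof -
    have "c \<noteq> n" using that(2) n_max r_in_V by force
    then have "c \<notin> descendants par n"
      using descendants_parent[of c par n r] that(1) r_in_Z descendants_n by blast
    then show ?thesis using forest_in_closed(1)[OF forest that(1)] descendants_n by blast
  qed
  then show ?thesis unfolding children_def restrict_map_def by force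
qed

lemma MD_restrict: "MD (par |` Z) r = MD par r"
proof (rule MD_cong[where S = Z])
  show "\<forall>v u. par v = Some u \<longrightarrow> u \<in> Z \<longrightarrow> v < u \<longrightarrow> v \<in> Z"
  proof (intro allI impI)
    fix v u assume v: "par v = Some u" "u \<in> Z" "v < u"
    have "v \<noteq> n" using v(2,3) Z_subset n_max by force
    then have "v \<notin> descendants par n"
      using descendants_parent[of v par n u] v(1,2) descendants_n by blast
    then show "v \<in> Z" using forest_in_closed(1)[OF forest v(1)] descendants_n by blast
  qed
  show "\<forall>v \<in> Z - {r}. par v = (par |` Z) v" by simp
  show "\<forall>v u. (par |` Z) v = Some u \<longrightarrow> u \<in> Z \<longrightarrow> v < u \<longrightarrow> v \<in> Z"
    by (simp add: restrict_map_def)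
qed (use r_in_Z root_r in simp_all)

lemma restrict_in_A_trees: "par |` Z \<in> A_trees l k Z"
proof -
  have "roots_in Z (par |` Z) = {r}" "forest_in Z (par |` Z)"
    using restrict_trees_rooted_Z unfolding trees_rooted_def by auto
  moreover have "card {c \<in> children par r. c < r} = l \<and> card (MD par r) = k + 1"
    using A roots unfolding A_trees_def by auto
  ultimately show ?thesis unfolding A_trees_def using low_children_restrict MD_restrict by simp
qed

lemma p_in_Z: "p \<in> Z"
  using parent_not_descendant[OF forest parent_n] forest_in_closed(2)[OF forest parent_n]
    descendants_n by blast

lemma subtree_trees_rooted: "par |` (V - Z - {n}) \<in> trees_rooted (V - Z) n"
proof (rule restrict_trees_rooted)
  show "n \<in> V - Z" using descendants_n descendants_self by blast
  show "u \<in> V - Z" if "v \<in> V - Z - {n}" "par v = Some u" for v u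
    using descendants_parent[of v par n u] that descendants_n by blast
  show "(v, n) \<in> (par_edges par)\<^sup>*" if "v \<in> V - Z" for v
    using that descendants_n unfolding descendants_def by blast
qed

end

definition graft ::
    "nat set \<Rightarrow> nat \<Rightarrow> (nat \<Rightarrow> nat option) \<Rightarrow> nat \<Rightarrow> (nat \<Rightarrow> nat option) \<Rightarrow> (nat \<Rightarrow> nat option)" where
  "graft Z n R p T = (\<lambda>v. if v \<in> Z then R v else if v = n then Some p else T v)"

lemma (in A_split) graft_restrict: "graft Z n (par |` Z) p (par |` (V - Z - {n})) = par"
proof
  fix v
  show "graft Z n (par |` Z) p (par |` (V - Z - {n})) v = par v"
    using parent_n forest_in_outside[OF forest, of v] unfolding graft_def by (cases "v \<in> V") auto
qed

locale A_graft =
  fixes l k :: nat and V Z :: "nat set" and n p r :: nat and R T :: "nat \<Rightarrow> nat option"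
  assumes n_in_V: "n \<in> V" and n_max: "\<forall>v \<in> V. v \<le> n" and Z_subset: "Z \<subseteq> V - {n}"
    and A: "R \<in> A_trees l k Z" and p_in_Z: "p \<in> Z" and tree: "T \<in> trees_rooted (V - Z) n"
    and roots_R: "roots_in Z R = {r}"
begin

lemma forest_R: "forest_in Z R"
  using A unfolding A_trees_def by blast

lemma forest_T: "forest_in (V - Z) T" and roots_T: "roots_in (V - Z) T = {n}"
  using tree unfolding trees_rooted_def by auto

lemma T_n: "T n = None" and r_in_Z: "r \<in> Z" and R_r: "R r = None"
  using roots_T roots_R unfolding roots_in_def by auto

lemma n_notin_Z: "n \<notin> Z"
  using Z_subset by blast

lemma graft_Z: "v \<in> Z \<Longrightarrow> graft Z n R p T v = R v"
  and graft_n: "graft Z n R p T n = Some p"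
  and graft_other: "v \<notin> Z \<Longrightarrow> v \<noteq> n \<Longrightarrow> graft Z n R p T v = T v"
  unfolding graft_def using n_notin_Z by auto

lemma reach_graft_R:
  "(v, y) \<in> (par_edges R)\<^sup>* \<Longrightarrow> v \<in> Z \<Longrightarrow> (v, y) \<in> (par_edges (graft Z n R p T))\<^sup>*"
proof (induction rule: converse_rtrancl_induct)
  case (step v w)
  then have "R v = Some w" "w \<in> Z" using forest_in_closed(2)[OF forest_R] by auto
  then have "(v, w) \<in> par_edges (graft Z n R p T)" using step(4) graft_Z by simp
  then show ?case using step(3) \<open>w \<in> Z\<close> by (meson converse_rtrancl_into_rtrancl)
qed simp

lemma reach_graft_T: "(v, y) \<in> (par_edges T)\<^sup>* \<Longrightarrow> (v, y) \<in> (par_edges (graft Z n R p T))\<^sup>*"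
proof (induction rule: converse_rtrancl_induct)
  case (step v w)
  then have "T v = Some w" by simp
  then have "v \<in> V - Z" "v \<noteq> n" using forest_in_closed(1)[OF forest_T] T_n by auto
  then have "graft Z n R p T v = Some w" using graft_other \<open>T v = Some w\<close> by simp
  then show ?case using step(3) by (meson converse_rtrancl_into_rtrancl par_edges_iff)
qed simp

lemma reach_graft_stays_in_Z:
  "(v, y) \<in> (par_edges (graft Z n R p T))\<^sup>* \<Longrightarrow> v \<in> Z \<Longrightarrow> y \<in> Z"
proof (induction rule: rtrancl_induct)
  case (step y z)
  then have "R y = Some z" using graft_Z by simp
  then show ?case using forest_in_closed(2)[OF forest_R] by blast
qed simp

lemma reach_graft_r: "v \<in> V \<Longrightarrow> (v, r) \<in> (par_edges (graft Z n R p T))\<^sup>*"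
proof -
  have in_Z: "(v, r) \<in> (par_edges (graft Z n R p T))\<^sup>*" if "v \<in> Z" for v
    using forest_in_reach_root[OF forest_R that] roots_R reach_graft_R that by auto
  assume v: "v \<in> V"
  show ?thesis
  proof (cases "v \<in> Z")
    case False
    then have "(v, n) \<in> (par_edges T)\<^sup>*" using forest_in_reach_root[OF forest_T] v roots_T by auto
    then have "(v, n) \<in> (par_edges (graft Z n R p T))\<^sup>*" by (rule reach_graft_T)
    moreover have "(n, p) \<in> par_edges (graft Z n R p T)" using graft_n by simp
    ultimately show ?thesis using in_Z[OF p_in_Z] by (meson rtrancl.rtrancl_into_rtrancl rtrancl_trans)
  qed (rule in_Z)
qed

lemma roots_graft: "roots_in V (graft Z n R p T) = {r}"
proof (intro equalityI subsetI)
  fix v assume v: "v \<in> roots_in V (graft Z n R p T)"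
  show "v \<in> {r}"
  proof (cases "v \<in> Z")
    case True
    then show ?thesis using v graft_Z roots_R unfolding roots_in_def by auto
  next
    case False
    then have "v \<noteq> n" using v graft_n unfolding roots_in_def by auto
    then show ?thesis using v False graft_other roots_T unfolding roots_in_def by auto
  qed
qed (use r_in_Z R_r graft_Z Z_subset in \<open>auto simp: roots_in_def\<close>)

lemma forest_graft: "forest_in V (graft Z n R p T)"
  unfolding forest_in_def
proof (intro conjI ballI allI impI)
  show "graft Z n R p T v = None" if "v \<notin> V" for v
  proof -
    have "v \<notin> Z" "v \<noteq> n" "v \<notin> V - Z" using that Z_subset n_in_V by auto
    then show ?thesis using graft_other forest_in_outside[OF forest_T] by simp
  qed
  show "u \<in> V" if "v \<in> V" "graft Z n R p T v = Some u" for v u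
  proof (cases "v \<in> Z")
    case True
    then show ?thesis using that graft_Z forest_in_closed(2)[OF forest_R] Z_subset by auto
  next
    case False
    then show ?thesis
      using that graft_n graft_other forest_in_closed(2)[OF forest_T] p_in_Z Z_subset
      by (cases "v = n") auto
  qed
  show "\<exists>r \<in> roots_in V (graft Z n R p T). (v, r) \<in> (par_edges (graft Z n R p T))\<^sup>*" if "v \<in> V" for v
    using reach_graft_r[OF that] roots_graft by blast
qed

lemma descendants_graft: "descendants (graft Z n R p T) n = V - Z"
proof (intro equalityI subsetI)
  fix v assume "v \<in> V - Z"
  then have "(v, n) \<in> (par_edges T)\<^sup>*" using forest_in_reach_root[OF forest_T] roots_T by auto
  then show "v \<in> descendants (graft Z n R p T) n"
    using reach_graft_T unfolding descendants_def by blast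
next
  fix v assume "v \<in> descendants (graft Z n R p T) n"
  then have v: "(v, n) \<in> (par_edges (graft Z n R p T))\<^sup>*" unfolding descendants_def by simp
  have "v \<notin> Z" using reach_graft_stays_in_Z[OF v] n_notin_Z by blast
  moreover have "v \<in> V"
  proof (cases "v = n")
    case False
    then obtain u where "graft Z n R p T v = Some u"
      using reach_first_step[OF v] by blast
    then show ?thesis using forest_in_closed(1)[OF forest_graft] by blast
  qed (use n_in_V in simp)
  ultimately show "v \<in> V - Z" by blast
qed

lemma low_children_graft: "{c \<in> children (graft Z n R p T) r. c < r} = {c \<in> children R r. c < r}"
proof -
  have "c \<in> Z" if "graft Z n R p T c = Some r" "c < r" for c
  proof (rule ccontr)
    assume c: "c \<notin> Z"
    show False
    proof (cases "c = n")
      case True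
      then show False using that(2) n_max r_in_Z Z_subset by force
    next
      case False
      then have "T c = Some r" using that(1) graft_other c by simp
      then show False using forest_in_closed(2)[OF forest_T] r_in_Z by blast
    qed
  qed
  moreover have "c \<in> Z" if "R c = Some r" for c using forest_in_closed(1)[OF forest_R that] .
  ultimately show ?thesis unfolding children_def using graft_Z by force
qed

lemma MD_graft: "MD (graft Z n R p T) r = MD R r"
proof (rule MD_cong[where S = Z])
  show "graft Z n R p T r = None" using graft_Z r_in_Z R_r by simp
  show "\<forall>v u. graft Z n R p T v = Some u \<longrightarrow> u \<in> Z \<longrightarrow> v < u \<longrightarrow> v \<in> Z"
  proof (intro allI impI)
    fix v u assume v: "graft Z n R p T v = Some u" "u \<in> Z" "v < u"
    show "v \<in> Z"
    proof (rule ccontr)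
      assume "v \<notin> Z"
      moreover have "v \<noteq> n" using v(2,3) Z_subset n_max by force
      ultimately have "T v = Some u" using v(1) graft_other by simp
      then show False using forest_in_closed(2)[OF forest_T] v(2) by blast
    qed
  qed
qed (use r_in_Z R_r graft_Z forest_in_closed(1)[OF forest_R] in auto)

lemma graft_in_A_trees: "graft Z n R p T \<in> A_trees l k V"
proof -
  have "card {c \<in> children R r. c < r} = l \<and> card (MD R r) = k + 1"
    using A roots_R unfolding A_trees_def by auto
  then show ?thesis
    unfolding A_trees_def using forest_graft roots_graft low_children_graft MD_graft by simp
qed

lemma restrict_graft_Z: "graft Z n R p T |` Z = R"
proof
  fix v
  show "(graft Z n R p T |` Z) v = R v"
    using graft_Z forest_in_outside[OF forest_R, of v] by (auto simp: restrict_map_def)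
qed

lemma restrict_graft_subtree: "graft Z n R p T |` (V - Z - {n}) = T"
proof
  fix v
  show "(graft Z n R p T |` (V - Z - {n})) v = T v"
    using graft_other T_n forest_in_outside[OF forest_T, of v] by (auto simp: restrict_map_def)
qed

end


definition A_key :: "nat \<Rightarrow> nat set \<Rightarrow> (nat \<Rightarrow> nat option) \<Rightarrow> nat set" where
  "A_key n V par = (if par n = None then {} else V - descendants par n)"

lemma finite_A_trees: "finite V \<Longrightarrow> finite (A_trees l k V)"
  unfolding A_trees_def using finite_forests_in by simp

lemma A_split_of_key:
  assumes A: "par \<in> A_trees l k V" and key: "A_key n V par = Z" "Z \<noteq> {}"
    and n: "n \<in> V" and n_max: "\<forall>v \<in> V. v \<le> n"
  obtains p r where "par n = Some p" "A_split l k V Z n p r par"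
proof -
  obtain p where p: "par n = Some p" using key unfolding A_key_def by (cases "par n") auto
  obtain r where roots: "roots_in V par = {r}"
    using A card_1_singletonE unfolding A_trees_def by blast
  have "descendants par n \<subseteq> V"
    using descendants_subset[of V par n] A n unfolding A_trees_def by blast
  moreover have "Z = V - descendants par n" using key(1) p unfolding A_key_def by simp
  ultimately have "descendants par n = V - Z" "Z \<subseteq> V" by auto
  with A p n n_max roots have "A_split l k V Z n p r par" by unfold_locales
  with p show thesis by (rule that)
qed

lemma A_graft_of:
  assumes "R \<in> A_trees l k Z" "p \<in> Z" "T \<in> trees_rooted (V - Z) n"
    and "n \<in> V" "\<forall>v \<in> V. v \<le> n" "Z \<subseteq> V - {n}"
  obtains r where "A_graft l k V Z n p r R T"
proof -
  obtain r where "roots_in Z R = {r}"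
    using assms(1) card_1_singletonE unfolding A_trees_def by blast
  then show thesis using that assms by (blast intro: A_graft.intro)
qed

lemma card_A_fibre:
  assumes n: "n \<in> V" and n_max: "\<forall>v \<in> V. v \<le> n" and Z: "Z \<subseteq> V - {n}" "Z \<noteq> {}"
  shows "card {par \<in> A_trees l k V. A_key n V par = Z}
    = card (A_trees l k Z) * (card Z * card (trees_rooted (V - Z) n))"
proof -
  let ?f = "\<lambda>par. (par |` Z, the (par n), par |` (V - Z - {n}))"
  let ?g = "\<lambda>(R, p, T). graft Z n R p T"
  have "card {par \<in> A_trees l k V. A_key n V par = Z} = card (A_trees l k Z \<times> Z \<times> trees_rooted (V - Z) n)"
  proof (rule card_eq_by_inverses[where f = ?f and g = ?g])
    fix par assume "par \<in> {par \<in> A_trees l k V. A_key n V par = Z}"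
    then obtain p r where p: "par n = Some p" and split: "A_split l k V Z n p r par"
      using A_split_of_key Z(2) n n_max by blast
    show "?f par \<in> A_trees l k Z \<times> Z \<times> trees_rooted (V - Z) n \<and> ?g (?f par) = par"
      using A_split.restrict_in_A_trees[OF split] A_split.p_in_Z[OF split]
        A_split.subtree_trees_rooted[OF split] A_split.graft_restrict[OF split] p by simp
  next
    fix a assume "a \<in> A_trees l k Z \<times> Z \<times> trees_rooted (V - Z) n"
    then obtain R p T where a: "a = (R, p, T)" "R \<in> A_trees l k Z" "p \<in> Z" "T \<in> trees_rooted (V - Z) n"
      by auto
    then obtain r where graft: "A_graft l k V Z n p r R T" using A_graft_of n n_max Z(1) by blast
    have "A_key n V (graft Z n R p T) = Z"
      using A_graft.graft_n[OF graft] A_graft.descendants_graft[OF graft] Z(1)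
      unfolding A_key_def by auto
    then show "?g a \<in> {par \<in> A_trees l k V. A_key n V par = Z} \<and> ?f (?g a) = a"
      using A_graft.graft_in_A_trees[OF graft] A_graft.restrict_graft_Z[OF graft]
        A_graft.restrict_graft_subtree[OF graft] A_graft.graft_n[OF graft] a(1) by simp
  qed
  then show ?thesis by (simp add: card_cartesian_product)
qed

lemma card_A_trees_recurrence:
  assumes finite: "finite V" and n: "n \<in> V" and n_max: "\<forall>v \<in> V. v \<le> n"
  shows "card (A_trees l k V) = card (MD_forests l k (V - {n})) +
     (\<Sum>Z \<in> Pow (V - {n}) - {{}}. card (A_trees l k Z) * (card Z * card (trees_rooted (V - Z) n)))"
proof -
  have key: "A_key n V par \<subseteq> V - {n} \<and> (A_key n V par = {} \<longleftrightarrow> par n = None)"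
    if par: "par \<in> A_trees l k V" for par
  proof (cases "par n")
    case (Some p)
    obtain r where roots: "roots_in V par = {r}"
      using par card_1_singletonE unfolding A_trees_def by blast
    have forest: "forest_in V par" using par unfolding A_trees_def by blast
    then have "descendants par n = V - (V - descendants par n)"
      using descendants_subset[OF forest n] by blast
    with par Some n n_max roots interpret A_split l k V "V - descendants par n" n p r par
      by unfold_locales auto
    show ?thesis using r_in_Z Some unfolding A_key_def by auto
  qed (simp add: A_key_def)
  have "card (A_trees l k V) = card {par \<in> A_trees l k V. A_key n V par = {}}
      + (\<Sum>Z \<in> Pow (V - {n}) - {{}}. card {par \<in> A_trees l k V. A_key n V par = Z})"
    using finite_A_trees[OF finite] finite key by (intro card_eq_sum_card_fibres) auto
  also have "card {par \<in> A_trees l k V. A_key n V par = {}} = card (MD_forests l k (V - {n}))"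
  proof -
    have "{par \<in> A_trees l k V. A_key n V par = {}} = {par \<in> A_trees l k V. par n = None}"
      using key by blast
    then show ?thesis using A_trees_root_eq[OF finite n n_max] by simp
  qed
  also have "(\<Sum>Z \<in> Pow (V - {n}) - {{}}. card {par \<in> A_trees l k V. A_key n V par = Z})
      = (\<Sum>Z \<in> Pow (V - {n}) - {{}}. card (A_trees l k Z) * (card Z * card (trees_rooted (V - Z) n)))"
    using card_A_fibre[OF n n_max] by (intro sum.cong) auto
  finally show ?thesis .
qed


section \<open>Solving the recurrences\<close>

lemma sum_nonempty_subsets_card:
  fixes g :: "nat \<Rightarrow> nat"
  assumes "finite W"
  shows "(\<Sum>Z \<in> Pow W - {{}}. g (card Z)) = (\<Sum>z = 1..card W. (card W choose z) * g z)"
proof -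
  have finite: "finite (Pow W - {{}})" using assms by simp
  have "card ` (Pow W - {{}}) \<subseteq> {1..card W}"
    using assms by (auto simp: Suc_le_eq card_gt_0_iff card_mono finite_subset)
  then have "(\<Sum>Z \<in> Pow W - {{}}. g (card Z))
      = (\<Sum>z = 1..card W. \<Sum>Z \<in> {Z \<in> Pow W - {{}}. card Z = z}. g (card Z))"
    by (rule sum.group[OF finite finite_atLeastAtMost, symmetric])
  also have "\<dots> = (\<Sum>z = 1..card W. (card W choose z) * g z)"
  proof (rule sum.cong[OF refl])
    fix z assume "z \<in> {1..card W}"
    then have "{Z \<in> Pow W - {{}}. card Z = z} = {Z. Z \<subseteq> W \<and> card Z = z}" by auto
    then show "(\<Sum>Z \<in> {Z \<in> Pow W - {{}}. card Z = z}. g (card Z)) = (card W choose z) * g z"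
      using n_subsets[OF assms, of z] by simp
  qed
  finally show ?thesis .
qed

lemma choose_mult_reflect:
  assumes "1 \<le> z" "z \<le> m"
  shows "(m choose z) * z = (m choose (m + 1 - z)) * (m + 1 - z)"
proof -
  have "(m choose z) * z = m * ((m - 1) choose (z - 1))"
    using times_binomial_minus1_eq[of z m] assms by (simp add: mult.commute)
  also have "(m - 1) choose (z - 1) = (m - 1) choose (m - z)"
    using binomial_symmetric[of "z - 1" "m - 1"] assms by simp
  also have "m * ((m - 1) choose (m - z)) = (m + 1 - z) * (m choose (m + 1 - z))"
    using times_binomial_minus1_eq[of "m + 1 - z" m] assms by simp
  finally show ?thesis by (simp add: mult.commute)
qed

lemma card_A_trees_interval_recurrence:
  assumes "1 \<le> n"
  shows "card (A_trees l k {1..n}) = card (MD_forests l k {1..n - 1}) +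
    (\<Sum>z = 1..n - 1. ((n - 1) choose z) *
       (card (A_trees l k {1..z}) * (z * card (trees_rooted {1..n - z} (n - z)))))"
proof -
  let ?V = "{1..n}"
  have V: "?V - {n} = {1..n - 1}" using assms by auto
  have summand: "card (A_trees l k Z) * (card Z * card (trees_rooted (?V - Z) n))
      = card (A_trees l k {1..card Z}) * (card Z * card (trees_rooted {1..n - card Z} (n - card Z)))"
    if "Z \<in> Pow {1..n - 1} - {{}}" for Z
  proof -
    have Z: "Z \<subseteq> ?V" "n \<notin> Z" using that assms by auto
    then have "finite Z" using finite_subset[OF Z(1)] by simp
    have card: "card (?V - Z) = n - card Z" using card_Diff_subset[OF \<open>finite Z\<close> Z(1)] by simp
    have "card (trees_rooted (?V - Z) n) = card (trees_rooted {1..card (?V - Z)} (card (?V - Z)))"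
      by (rule card_trees_rooted_eq) (use assms Z in simp_all)
    then have "card (trees_rooted (?V - Z) n) = card (trees_rooted {1..n - card Z} (n - card Z))"
      unfolding card .
    then show ?thesis using card_A_trees_eq_rank[OF \<open>finite Z\<close>, of l k] by simp
  qed
  let ?a = "\<lambda>i. card (A_trees l k {1..i})" and ?t = "\<lambda>i. card (trees_rooted {1..n - i} (n - i))"
  have "(\<Sum>Z \<in> Pow {1..n - 1} - {{}}. card (A_trees l k Z) * (card Z * card (trees_rooted (?V - Z) n)))
      = (\<Sum>Z \<in> Pow {1..n - 1} - {{}}. ?a (card Z) * (card Z * ?t (card Z)))"
    by (rule sum.cong[OF refl summand])
  also have "\<dots> = (\<Sum>z = 1..n - 1. ((n - 1) choose z) * (?a z * (z * ?t z)))"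
    using sum_nonempty_subsets_card[of "{1..n - 1}" "\<lambda>i. ?a i * (i * ?t i)"] by simp
  finally have sum_eq: "(\<Sum>Z \<in> Pow {1..n - 1} - {{}}. card (A_trees l k Z) * (card Z * card (trees_rooted (?V - Z) n)))
      = (\<Sum>z = 1..n - 1. ((n - 1) choose z) * (?a z * (z * ?t z)))" .
  have "card (A_trees l k ?V) = card (MD_forests l k (?V - {n})) +
    (\<Sum>Z \<in> Pow (?V - {n}) - {{}}. card (A_trees l k Z) * (card Z * card (trees_rooted (?V - Z) n)))"
    by (rule card_A_trees_recurrence) (use assms in auto)
  then show ?thesis unfolding V sum_eq .
qed

lemma card_B_forests_interval_recurrence:
  assumes "1 \<le> n"
  shows "card (B_forests l k {1..n} n) = card (MD_forests l k {1..n - 1}) +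
    (\<Sum>z = 1..n - 1. ((n - 1) choose z) *
       (z * card (trees_rooted {1..z} z) * card (B_forests l k {1..n - z} (n - z))))"
proof -
  let ?V = "{1..n}"
  have V: "?V - {n} = {1..n - 1}" using assms by auto
  have summand: "card (rooted_trees I) * card (B_forests l k (?V - I) n)
      = card I * card (trees_rooted {1..card I} (card I)) * card (B_forests l k {1..n - card I} (n - card I))"
    if "I \<in> Pow {1..n - 1} - {{}}" for I
  proof -
    have I: "I \<subseteq> ?V" "n \<notin> I" using that assms by auto
    then have "finite I" using finite_subset[OF I(1)] by simp
    have "card (?V - I) = n - card I" using card_Diff_subset[OF \<open>finite I\<close> I(1)] by simp
    moreover have "Max (?V - I) = n" "?V - I \<noteq> {}" using assms I by (auto intro: Max_eqI)
    ultimately show ?thesis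
      using card_rooted_trees[OF \<open>finite I\<close>] card_B_forests_eq_rank[of "?V - I" l k] by simp
  qed
  let ?t = "\<lambda>i. card (trees_rooted {1..i} i)" and ?b = "\<lambda>i. card (B_forests l k {1..n - i} (n - i))"
  have "(\<Sum>I \<in> Pow {1..n - 1} - {{}}. card (rooted_trees I) * card (B_forests l k (?V - I) n))
      = (\<Sum>I \<in> Pow {1..n - 1} - {{}}. card I * ?t (card I) * ?b (card I))"
    by (rule sum.cong[OF refl summand])
  also have "\<dots> = (\<Sum>z = 1..n - 1. ((n - 1) choose z) * (z * ?t z * ?b z))"
    using sum_nonempty_subsets_card[of "{1..n - 1}" "\<lambda>i. i * ?t i * ?b i"] by simp
  finally have sum_eq: "(\<Sum>I \<in> Pow {1..n - 1} - {{}}. card (rooted_trees I) * card (B_forests l k (?V - I) n))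
      = (\<Sum>z = 1..n - 1. ((n - 1) choose z) * (z * ?t z * ?b z))" .
  have "card (B_forests l k ?V n) = card (MD_forests l k (?V - {n})) +
    (\<Sum>I \<in> Pow (?V - {n}) - {{}}. card (rooted_trees I) * card (B_forests l k (?V - I) n))"
    by (rule card_B_forests_recurrence) (use assms in auto)
  then show ?thesis unfolding V sum_eq .
qed

lemma card_A_trees_eq_card_B_forests:
  assumes "1 \<le> n"
  shows "card (A_trees l k {1..n}) = card (B_forests l k {1..n} n)"
  using assms
proof (induction n rule: less_induct)
  case (less n)
  let ?a = "\<lambda>m. card (A_trees l k {1..m})" and ?b = "\<lambda>m. card (B_forests l k {1..m} m)"
    and ?t = "\<lambda>m. card (trees_rooted {1..m} m)"
  have "(\<Sum>z = 1..n - 1. ((n - 1) choose z) * (?a z * (z * ?t (n - z))))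
      = (\<Sum>z = 1..n - 1. ((n - 1) choose (n - z)) * ((n - z) * ?t (n - z) * ?b (n - (n - z))))"
  proof (rule sum.cong[OF refl])
    fix z assume z: "z \<in> {1..n - 1}"
    then have IH: "?a z = ?b z" and reflect: "n - (n - z) = z" using less by auto
    have "((n - 1) choose z) * (?a z * (z * ?t (n - z))) = (((n - 1) choose z) * z) * ?t (n - z) * ?b z"
      using IH by (simp add: algebra_simps)
    also have "((n - 1) choose z) * z = ((n - 1) choose (n - z)) * (n - z)"
      using choose_mult_reflect[of z "n - 1"] z by simp
    finally show "((n - 1) choose z) * (?a z * (z * ?t (n - z)))
        = ((n - 1) choose (n - z)) * ((n - z) * ?t (n - z) * ?b (n - (n - z)))"
      using reflect by (simp add: algebra_simps)
  qed
  also have "\<dots> = (\<Sum>z = 1..n - 1. ((n - 1) choose z) * (z * ?t z * ?b (n - z)))"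
    by (rule sum.reindex_bij_witness[where i = "\<lambda>z. n - z" and j = "\<lambda>z. n - z"]) auto
  finally show ?case
    using card_A_trees_interval_recurrence[OF less.prems] card_B_forests_interval_recurrence[OF less.prems]
    by simp
qed

theorem corollary4p2:
  fixes n l k :: nat
  assumes "n \<ge> 1"
  shows "A_count n l k = B_count n l k"
  using card_A_trees_eq_card_B_forests[OF assms]
  by (simp add: A_count_eq_card_A_trees B_count_eq_card_B_forests)

end
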